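(* For all $A\in\mathcal{M}$, $W\in\mathcal{W}$, $\varepsilon\in\mathbb{R}\setminus\{0\}$ and unit vectors $u\in S^{d-1}$, $$0\le\sigma_{\varepsilon u;W}(A)\le V_u(A;W)\quad\text{and}\quad\lim_{\varepsilon\to0}\sigma_{\varepsilon u;W}(A)=V_u(A;W).$$ Consequently, for all $A\in\mathcal{M}$ and $\varepsilon\ne0$, $0\le\sum_{j=1}^d\sigma_{\varepsilon e_j;W}(A)\le{\operatorname{Per}}_{\mathbf{B}}(A;W)$ and $\lim_{\varepsilon\to0}\sum_{j=1}^d\sigma_{\varepsilon e_j;W}(A)={\operatorname{Per}}_{\mathbf{B}}(A;W)$.
   Context: $\mathcal{M}$: Lebesgue measurable subsets of $\mathbb{R}^d$ modulo null sets. $\mathcal{W}$: bounded open $W$ with $\mathcal{L}^d(\partial W)=0$. $\delta_{y;W}(A)=\mathcal{L}^d(A\cap(y+A)\cap W)$. $W\ominus B=\{x:x+B\subset W\}$, and $[a,b]$ denotes the segment. For $u\ne0$: $\sigma_{u;W}(A)=\frac1{\|u\|}(\delta_{0;W\ominus[-u,0]}(A)-\delta_{u;W\ominus[-u,0]}(A)+\delta_{0;W\ominus[0,u]}(A)-\delta_{-u;W\ominus[0,u]}(A))$. $V_u(A;U)=\sup\{\int_U\mathbb{1}_A\langle\nabla\varphi,u\rangle dx:\varphi\in C^1_c(U,\mathbb{R}),|\varphi|\le1\}$; ${\operatorname{Per}}_{\mathbf{B}}(A;U)=\sum_{j=1}^dV_{e_j}(A;U)$, $(e_j)$ the canonical basis.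 *)

theory Defs
  imports "HOL-Analysis.Analysis"
begin

definition translate_set :: "'a::euclidean_space \<Rightarrow> 'a set \<Rightarrow> 'a set" where
  "translate_set y A = (\<lambda>a. y + a) ` A"

definition delta :: "'a::euclidean_space \<Rightarrow> 'a set \<Rightarrow> 'a set \<Rightarrow> real" where
  "delta y W A = measure lebesgue (A \<inter> translate_set y A \<inter> W)"

definition erosion :: "'a::euclidean_space set \<Rightarrow> 'a set \<Rightarrow> 'a set" where
  "erosion W B = {x. \<forall>b\<in>B. x + b \<in> W}"

definition sigma_cov :: "'a::euclidean_space \<Rightarrow> 'a set \<Rightarrow> 'a set \<Rightarrow> real" where
  "sigma_cov u W A =
     (1 / norm u) *
       (delta 0 (erosion W (closed_segment (- u) 0)) A
        - delta u (erosion W (closed_segment (- u) 0)) A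
        + delta 0 (erosion W (closed_segment 0 u)) A
        - delta (- u) (erosion W (closed_segment 0 u)) A)"

definition test_fun :: "'a::euclidean_space set \<Rightarrow> ('a \<Rightarrow> real) \<Rightarrow> ('a \<Rightarrow> 'a) \<Rightarrow> bool" where
  "test_fun U \<phi> g \<longleftrightarrow>
     (\<forall>x. (\<phi> has_derivative (\<lambda>h. g x \<bullet> h)) (at x)) \<and> continuous_on UNIV g \<and>
     compact (closure {x. \<phi> x \<noteq> 0}) \<and> closure {x. \<phi> x \<noteq> 0} \<subseteq> U \<and>
     (\<forall>x. \<bar>\<phi> x\<bar> \<le> 1)"

definition dir_var :: "'a::euclidean_space \<Rightarrow> 'a set \<Rightarrow> 'a set \<Rightarrow> ereal" where
  "dir_var u A U =
     (SUP p \<in> {(\<phi>, g). test_fun U \<phi> g}.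
        ereal (LINT x:U|lebesgue. indicator A x * (snd p x \<bullet> u)))"

definition per_B :: "'a::euclidean_space set \<Rightarrow> 'a set \<Rightarrow> ereal" where
  "per_B A U = (\<Sum>b\<in>Basis. dir_var b A U)"

end

theory Submission
  imports Defs
begin

text \<open>
  Write \<open>E\<^sub>w = W \<ominus> [0, w]\<close>. The differences of set covariograms in \<open>\<sigma>\<^sub>w(A)\<close> collapse to
  \<open>|w| \<sigma>\<^sub>w(A) = |N\<^sub>w| + |P\<^sub>w|\<close>, where \<open>N\<^sub>w\<close> (\<open>P\<^sub>w\<close>) is the set of \<open>y \<in> E\<^sub>w\<close> whose segment
  \<open>[y, y + w]\<close> leaves (enters) \<open>A\<close>; moreover \<open>|N\<^sub>w| + |P\<^sub>w|\<close> is the supremum of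
  \<open>\<integral> 1\<^sub>A (\<psi>(x - w) - \<psi>(x))\<close> over \<open>C\<^sup>1\<close> functions \<open>|\<psi>| \<le> 1\<close> supported in \<open>E\<^sub>w\<close>.

  Upper bound: for such \<open>\<psi>\<close>, \<open>\<psi>(x - w) - \<psi>(x)\<close> is a Riemann sum of \<open>-\<nabla>\<psi> \<cdot> w\<close> along the
  segment, i.e. (up to a small error) \<open>-\<nabla>\<phi> \<cdot> w\<close> for the average \<open>\<phi>\<close> of the translates
  \<open>\<psi>(\<cdot> - (k/n) w)\<close>, which is a test function on \<open>W\<close>; hence the integral is at most
  \<open>|w| V\<^sub>u(A; W)\<close>. Lower bound: for a fixed test function \<open>\<phi>\<close> and small \<open>w = \<epsilon> u\<close>, the
  first-order expansion of \<open>\<phi>(x - w) - \<phi>(x)\<close> shows that \<open>\<integral> 1\<^sub>A \<nabla>\<phi> \<cdot> u\<close> is at most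
  \<open>\<sigma>\<^sub>w(A)\<close> plus an error vanishing with \<open>\<epsilon>\<close>.
\<close>

lemma mem_erosion_segment:
  "x \<in> erosion W (closed_segment 0 w) \<longleftrightarrow> (\<forall>t\<in>{0..1}. x + t *\<^sub>R w \<in> W)"
  unfolding erosion_def closed_segment_def by (fastforce simp: add.commute)

lemma erosion_segment_subset: "erosion W (closed_segment 0 w) \<subseteq> W"
  using mem_erosion_segment[of _ W w] by force

lemma open_erosion_segment:
  assumes "open W"
  shows "open (erosion W (closed_segment 0 w))"
  unfolding open_contains_ball
proof
  fix x assume x: "x \<in> erosion W (closed_segment 0 w)"
  have "compact ((\<lambda>t. x + t *\<^sub>R w) ` {0..1})"
    by (intro compact_continuous_image continuous_intros) auto
  moreover have "(\<lambda>t. x + t *\<^sub>R w) ` {0..1} \<subseteq> W"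
    using x by (auto simp: mem_erosion_segment)
  ultimately obtain e where e: "e > 0" "(\<Union>y\<in>(\<lambda>t. x + t *\<^sub>R w) ` {0..1}. ball y e) \<subseteq> W"
    using compact_subset_open_imp_ball_epsilon_subset[OF _ assms] by blast
  have "ball x e \<subseteq> erosion W (closed_segment 0 w)"
  proof
    fix z assume "z \<in> ball x e"
    then have "z + t *\<^sub>R w \<in> ball (x + t *\<^sub>R w) e" for t
      by (simp add: dist_norm)
    with e(2) show "z \<in> erosion W (closed_segment 0 w)"
      unfolding mem_erosion_segment by blast
  qed
  with e(1) show "\<exists>e>0. ball x e \<subseteq> erosion W (closed_segment 0 w)" by blast
qed

lemma add_mem_erosion_segment_uminus:
  "w + y \<in> erosion W (closed_segment 0 (- w)) \<longleftrightarrow> y \<in> erosion W (closed_segment 0 w)"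
proof -
  have reflect: "w + y + t *\<^sub>R (- w) = y + (1 - t) *\<^sub>R w" for t
    by (simp add: algebra_simps)
  have "(\<forall>t\<in>{0..1}. P (1 - t)) \<longleftrightarrow> (\<forall>t\<in>{0..1::real}. P t)" for P
  proof
    assume reflected: "\<forall>t\<in>{0..1}. P (1 - t)"
    show "\<forall>t\<in>{0..1}. P t"
    proof
      fix t :: real assume "t \<in> {0..1}"
      then have "P (1 - (1 - t))"
        using reflected[rule_format, of "1 - t"] by auto
      then show "P t" by simp
    qed
  qed auto
  then show ?thesis
    unfolding mem_erosion_segment reflect .
qed

lemma compact_subset_erosion_segment:
  assumes "compact K" "open W" "K \<subseteq> W"
  obtains d where "d > 0" "\<And>w. norm w < d \<Longrightarrow> K \<subseteq> erosion W (closed_segment 0 w)"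
proof -
  obtain d where d: "d > 0" "(\<Union>s\<in>K. cball s d) \<subseteq> W"
    using compact_subset_open_imp_cball_epsilon_subset[OF assms] by blast
  have "K \<subseteq> erosion W (closed_segment 0 w)" if "norm w < d" for w
  proof
    fix s assume "s \<in> K"
    moreover have "norm (t *\<^sub>R w) \<le> d" if "t \<in> {0..1}" for t
    proof -
      have "\<bar>t\<bar> * norm w \<le> norm w"
        using that by (intro mult_left_le_one_le) auto
      with \<open>norm w < d\<close> show ?thesis by simp
    qed
    ultimately show "s \<in> erosion W (closed_segment 0 w)"
      using d(2) by (force simp: mem_erosion_segment dist_norm)
  qed
  with d(1) show ?thesis using that by blast
qed

text \<open>\<open>exit_set (- A) W w\<close> is the entry set \<open>P\<^sub>w\<close>, where the segment \<open>[y, y + w]\<close> enters \<open>A\<close>.\<close>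

definition exit_set :: "'a::euclidean_space set \<Rightarrow> 'a set \<Rightarrow> 'a \<Rightarrow> 'a set" where
  "exit_set A W w = {y \<in> erosion W (closed_segment 0 w). y \<in> A \<and> y + w \<notin> A}"

lemma exit_set_subset: "exit_set A W w \<subseteq> erosion W (closed_segment 0 w)"
  unfolding exit_set_def by blast

lemma translate_lebesgue_sets:
  assumes "A \<in> sets lebesgue"
  shows "{y. y + w \<in> A} \<in> sets lebesgue"
proof -
  have "{y. y + w \<in> A} = (\<lambda>a. - w + a) ` A"
    by (force simp: algebra_simps)
  with lebesgue_sets_translation[OF assms, of "- w"] show ?thesis by (simp only:)
qed

lemma lebesgue_sets_erosion_segment:
  assumes "open W"
  shows "erosion W (closed_segment 0 w) \<in> sets lebesgue"
  using open_erosion_segment[OF assms] by (simp add: borel_open)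

lemma exit_set_lmeasurable:
  assumes "A \<in> sets lebesgue" "bounded W" "open W"
  shows "exit_set A W w \<in> lmeasurable"
proof (rule bounded_set_imp_lmeasurable)
  show "bounded (exit_set A W w)"
    using assms(2) exit_set_subset erosion_segment_subset by (metis bounded_subset)
  have "exit_set A W w = erosion W (closed_segment 0 w) \<inter> A - {y. y + w \<in> A}"
    unfolding exit_set_def by auto
  also have "\<dots> \<in> sets lebesgue"
    using assms(1) translate_lebesgue_sets[OF assms(1)] lebesgue_sets_erosion_segment[OF assms(3)]
    by (intro sets.Diff sets.Int)
  finally show "exit_set A W w \<in> sets lebesgue" .
qed

lemma measure_exit_set_compl:
  "measure lebesgue (exit_set (- A) W w) = measure lebesgue (exit_set A W (- w))"
proof -
  have "(+) w ` exit_set (- A) W w = exit_set A W (- w)"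
  proof (rule set_eqI)
    fix x
    show "x \<in> (+) w ` exit_set (- A) W w \<longleftrightarrow> x \<in> exit_set A W (- w)"
      using add_mem_erosion_segment_uminus[of w "x - w" W]
      by (auto simp: exit_set_def image_iff algebra_simps intro!: bexI[of _ "x - w"])
  qed
  then show ?thesis
    using measure_translation[of w "exit_set (- A) W w"] by simp
qed

lemma delta_diff_eq_measure_exit_set:
  fixes A W :: "'a::euclidean_space set" and w :: 'a
  assumes "A \<in> sets lebesgue" "bounded W" "open W"
  defines "E \<equiv> erosion W (closed_segment 0 w)"
  shows "delta 0 E A - delta (- w) E A = measure lebesgue (exit_set A W w)"
proof -
  have E: "E \<in> sets lebesgue" "bounded E"
    unfolding E_def using lebesgue_sets_erosion_segment[OF assms(3)]
      bounded_subset[OF assms(2) erosion_segment_subset] by auto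
  have "translate_set (- w) A = {y. y + w \<in> A}"
    unfolding translate_set_def by (force simp: algebra_simps)
  then have "delta (- w) E A = measure lebesgue (A \<inter> {y. y + w \<in> A} \<inter> E)"
    unfolding delta_def by simp
  moreover have "delta 0 E A = measure lebesgue (A \<inter> E)"
    unfolding delta_def translate_set_def by simp
  moreover have "measure lebesgue (exit_set A W w)
      = measure lebesgue (A \<inter> E) - measure lebesgue (A \<inter> {y. y + w \<in> A} \<inter> E)"
  proof -
    have eq: "exit_set A W w = (A \<inter> E) - (A \<inter> {y. y + w \<in> A} \<inter> E)"
      unfolding exit_set_def E_def by auto
    have "A \<inter> E \<in> lmeasurable"
      using E assms(1) by (intro bounded_set_imp_lmeasurable) (auto intro: bounded_subset)
    moreover have "A \<inter> {y. y + w \<in> A} \<inter> E \<in> sets lebesgue"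
      using translate_lebesgue_sets[OF assms(1), of w] E(1) assms(1) by (intro sets.Int)
    ultimately show ?thesis
      unfolding eq by (intro measurable_measure_Diff) auto
  qed
  ultimately show ?thesis by simp
qed

lemma indicators_le_shift_difference_mult:
  fixes \<psi> :: "'a::euclidean_space \<Rightarrow> real"
  assumes P: "KP \<subseteq> exit_set (- A) W v" and N: "KN \<subseteq> exit_set A W v" and bound: "\<bar>\<psi> y\<bar> \<le> 1"
    and "y \<in> KP \<Longrightarrow> \<psi> y = 1" "y \<in> KN \<Longrightarrow> \<psi> y = - 1"
  shows "indicator KP y + indicator KN y - indicator ({x. \<psi> x \<noteq> 0} - (KP \<union> KN)) y
    \<le> (indicator A (y + v) - indicator A y) * \<psi> y"
proof -
  consider "y \<in> KP" | "y \<in> KN" | "y \<notin> KP \<union> KN"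
    by blast
  then show ?thesis
  proof cases
    case 1
    then have "y \<notin> KN" "y \<notin> A" "y + v \<in> A"
      using P N unfolding exit_set_def by auto
    with 1 assms(4) show ?thesis
      by simp
  next
    case 2
    then have "y \<notin> KP" "y \<in> A" "y + v \<notin> A"
      using P N unfolding exit_set_def by auto
    with 2 assms(5) show ?thesis
      by simp
  next
    case 3
    then show ?thesis
      using bound by (cases "\<psi> y = 0") (auto simp: indicator_def abs_le_iff)
  qed
qed

lemma sigma_cov_eq_exit_sets:
  assumes "A \<in> sets lebesgue" "bounded W" "open W"
  shows "sigma_cov w W A
    = (measure lebesgue (exit_set A W w) + measure lebesgue (exit_set (- A) W w)) / norm w"
proof -
  have "sigma_cov w W A = (1 / norm w)
      * ((delta 0 (erosion W (closed_segment 0 (- w))) A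
            - delta (- (- w)) (erosion W (closed_segment 0 (- w))) A)
         + (delta 0 (erosion W (closed_segment 0 w)) A
            - delta (- w) (erosion W (closed_segment 0 w)) A))"
    unfolding sigma_cov_def closed_segment_commute[of "- w" 0] by simp
  then show ?thesis
    unfolding delta_diff_eq_measure_exit_set[OF assms] measure_exit_set_compl by simp
qed

lemma sigma_cov_nonneg:
  assumes "A \<in> sets lebesgue" "bounded W" "open W"
  shows "0 \<le> sigma_cov w W A"
  unfolding sigma_cov_eq_exit_sets[OF assms] by simp

definition tsupport :: "('a::topological_space \<Rightarrow> real) \<Rightarrow> 'a set" where
  "tsupport \<psi> = closure {x. \<psi> x \<noteq> 0}"

definition has_continuous_gradient :: "('a::euclidean_space \<Rightarrow> real) \<Rightarrow> ('a \<Rightarrow> 'a) \<Rightarrow> bool" where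
  "has_continuous_gradient \<psi> g \<longleftrightarrow>
     (\<forall>x. (\<psi> has_derivative (\<lambda>h. g x \<bullet> h)) (at x)) \<and> continuous_on UNIV g"

lemma test_fun_iff:
  "test_fun U \<phi> g \<longleftrightarrow> has_continuous_gradient \<phi> g \<and> compact (tsupport \<phi>) \<and>
     tsupport \<phi> \<subseteq> U \<and> (\<forall>x. \<bar>\<phi> x\<bar> \<le> 1)"
  unfolding test_fun_def has_continuous_gradient_def tsupport_def by auto

lemma eq_0_outside_tsupport:
  assumes "x \<notin> tsupport \<psi>"
  shows "\<psi> x = 0"
  using assms closure_subset[of "{x. \<psi> x \<noteq> 0}"] unfolding tsupport_def by auto

lemma tsupport_subset_compact:
  fixes \<psi> :: "'a::metric_space \<Rightarrow> real"
  assumes "{x. \<psi> x \<noteq> 0} \<subseteq> C" "compact C"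
  shows "tsupport \<psi> \<subseteq> C" "compact (tsupport \<psi>)"
proof -
  show "tsupport \<psi> \<subseteq> C"
    unfolding tsupport_def by (rule closure_minimal[OF assms(1) compact_imp_closed[OF assms(2)]])
  then show "compact (tsupport \<psi>)"
    using compact_Int_closed[OF assms(2), of "tsupport \<psi>"] unfolding tsupport_def
    by (simp add: Int_absorb1)
qed

lemma has_continuous_gradient_imp_continuous:
  "has_continuous_gradient \<psi> g \<Longrightarrow> continuous_on UNIV \<psi>"
  unfolding has_continuous_gradient_def
  by (meson continuous_at_imp_continuous_on has_derivative_continuous)

lemma continuous_on_gradient_inner:
  assumes "has_continuous_gradient \<psi> g"
  shows "continuous_on UNIV (\<lambda>x. g x \<bullet> v)"
proof -
  have "continuous_on UNIV g"
    using assms unfolding has_continuous_gradient_def by blast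
  then show ?thesis
    by (rule continuous_on_inner[OF _ continuous_on_const])
qed

lemma gradient_eq_0_outside_tsupport:
  assumes "has_continuous_gradient \<psi> g" "x \<notin> tsupport \<psi>"
  shows "g x = 0"
proof -
  have "(\<psi> has_derivative (\<lambda>h. 0)) (at x)"
  proof (rule has_derivative_transform_within_open)
    show "((\<lambda>_. 0) has_derivative (\<lambda>h. 0)) (at x)" by simp
    show "open (- tsupport \<psi>)" "x \<in> - tsupport \<psi>"
      using assms(2) by (auto simp: tsupport_def)
  qed (use eq_0_outside_tsupport in force)
  moreover have "(\<psi> has_derivative (\<lambda>h. g x \<bullet> h)) (at x)"
    using assms(1) unfolding has_continuous_gradient_def by blast
  ultimately have "(\<lambda>h. g x \<bullet> h) = (\<lambda>h. 0)"
    using has_derivative_unique by blast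
  then show ?thesis by (metis inner_eq_zero_iff)
qed

lemma has_continuous_gradient_cmult:
  assumes "has_continuous_gradient \<psi> g"
  shows "has_continuous_gradient (\<lambda>x. c * \<psi> x) (\<lambda>x. c *\<^sub>R g x)"
proof -
  have "((\<lambda>x. c * \<psi> x) has_derivative (\<lambda>h. (c *\<^sub>R g x) \<bullet> h)) (at x)" for x
  proof -
    have "((\<lambda>x. c * \<psi> x) has_derivative (\<lambda>h. c * (g x \<bullet> h))) (at x)"
      using assms unfolding has_continuous_gradient_def by (blast intro: has_derivative_mult_right)
    then show ?thesis by simp
  qed
  moreover have "continuous_on UNIV g"
    using assms unfolding has_continuous_gradient_def by blast
  then have "continuous_on UNIV (\<lambda>x. c *\<^sub>R g x)"
    by (intro continuous_on_scaleR continuous_on_const)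
  ultimately show ?thesis
    unfolding has_continuous_gradient_def by blast
qed

lemma has_continuous_gradient_diff:
  assumes "has_continuous_gradient \<psi> g" "has_continuous_gradient \<theta> f"
  shows "has_continuous_gradient (\<lambda>x. \<psi> x - \<theta> x) (\<lambda>x. g x - f x)"
proof -
  have "((\<lambda>x. \<psi> x - \<theta> x) has_derivative (\<lambda>h. (g x - f x) \<bullet> h)) (at x)" for x
  proof -
    have "((\<lambda>x. \<psi> x - \<theta> x) has_derivative (\<lambda>h. g x \<bullet> h - f x \<bullet> h)) (at x)"
      using assms unfolding has_continuous_gradient_def by (blast intro: has_derivative_diff)
    then show ?thesis by (simp add: inner_diff_left)
  qed
  moreover have "continuous_on UNIV (\<lambda>x. g x - f x)"
    using assms unfolding has_continuous_gradient_def by (blast intro: continuous_on_diff)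
  ultimately show ?thesis
    unfolding has_continuous_gradient_def by blast
qed

lemma has_continuous_gradient_sum:
  assumes "\<And>i. i \<in> I \<Longrightarrow> has_continuous_gradient (\<psi> i) (g i)"
  shows "has_continuous_gradient (\<lambda>x. \<Sum>i\<in>I. \<psi> i x) (\<lambda>x. \<Sum>i\<in>I. g i x)"
proof -
  have "((\<lambda>x. \<Sum>i\<in>I. \<psi> i x) has_derivative (\<lambda>h. (\<Sum>i\<in>I. g i x) \<bullet> h)) (at x)" for x
  proof -
    have "((\<lambda>x. \<Sum>i\<in>I. \<psi> i x) has_derivative (\<lambda>h. \<Sum>i\<in>I. g i x \<bullet> h)) (at x)"
      by (intro has_derivative_sum) (use assms in \<open>auto simp: has_continuous_gradient_def\<close>)
    then show ?thesis by (simp add: inner_sum_left)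
  qed
  moreover have "continuous_on UNIV (\<lambda>x. \<Sum>i\<in>I. g i x)"
    by (intro continuous_on_sum) (use assms in \<open>auto simp: has_continuous_gradient_def\<close>)
  ultimately show ?thesis
    unfolding has_continuous_gradient_def by blast
qed

lemma has_continuous_gradient_translate:
  assumes "has_continuous_gradient \<psi> g"
  shows "has_continuous_gradient (\<lambda>x. \<psi> (x - a)) (\<lambda>x. g (x - a))"
proof -
  have "((\<lambda>x. \<psi> (x - a)) has_derivative (\<lambda>h. g (x - a) \<bullet> h)) (at x)" for x
  proof -
    have "((\<lambda>x. x - a) has_derivative (\<lambda>h. h)) (at x)"
      by (rule has_derivative_diff[OF has_derivative_ident has_derivative_const, simplified])
    moreover have "(\<psi> has_derivative (\<lambda>h. g (x - a) \<bullet> h)) (at (x - a))"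
      using assms unfolding has_continuous_gradient_def by blast
    ultimately show ?thesis
      by (rule has_derivative_compose)
  qed
  moreover have "continuous_on UNIV g"
    using assms unfolding has_continuous_gradient_def by blast
  then have "continuous_on UNIV (\<lambda>x. g (x - a))"
    by (rule continuous_on_compose2) (auto intro: continuous_on_diff continuous_on_id continuous_on_const)
  ultimately show ?thesis
    unfolding has_continuous_gradient_def by simp
qed

lemma has_continuous_gradient_compose:
  assumes "\<And>s. (f has_real_derivative f' s) (at s)" "continuous_on UNIV f'"
    and "has_continuous_gradient \<psi> g"
  shows "has_continuous_gradient (\<lambda>x. f (\<psi> x)) (\<lambda>x. f' (\<psi> x) *\<^sub>R g x)"
  unfolding has_continuous_gradient_def
proof (intro conjI allI)
  show "((\<lambda>x. f (\<psi> x)) has_derivative (\<lambda>h. (f' (\<psi> x) *\<^sub>R g x) \<bullet> h)) (at x)" for x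
  proof -
    have "(\<psi> has_derivative (\<lambda>h. g x \<bullet> h)) (at x)"
      using assms(3) unfolding has_continuous_gradient_def by blast
    from DERIV_compose_FDERIV[OF assms(1) this] show ?thesis
      by (simp add: mult.commute)
  qed
  have "continuous_on UNIV (\<lambda>x. f' (\<psi> x))"
    using continuous_on_compose2[OF assms(2) has_continuous_gradient_imp_continuous[OF assms(3)]]
    by simp
  moreover have "continuous_on UNIV g"
    using assms(3) unfolding has_continuous_gradient_def by blast
  ultimately show "continuous_on UNIV (\<lambda>x. f' (\<psi> x) *\<^sub>R g x)"
    by (rule continuous_on_scaleR)
qed

lemma uniformly_continuous_on_compact_support:
  fixes f :: "'a::euclidean_space \<Rightarrow> 'b::real_normed_vector"
  assumes f: "continuous_on UNIV f" and K: "compact K" and zero: "\<And>x. x \<notin> K \<Longrightarrow> f x = 0"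
  shows "uniformly_continuous_on UNIV f"
  unfolding uniformly_continuous_on_def
proof (intro allI impI)
  fix e :: real assume "e > 0"
  obtain R where R: "\<forall>x\<in>K. norm x \<le> R"
    using compact_imp_bounded[OF K] unfolding bounded_iff by blast
  have "uniformly_continuous_on (cball 0 (R + 1)) f"
    by (rule compact_uniformly_continuous[OF continuous_on_subset[OF f]]) auto
  then obtain d where d: "d > 0"
    "\<forall>x\<in>cball 0 (R + 1). \<forall>y\<in>cball 0 (R + 1). dist y x < d \<longrightarrow> dist (f y) (f x) < e"
    using \<open>e > 0\<close> unfolding uniformly_continuous_on_def by blast
  have "dist (f y) (f x) < e" if xy: "dist y x < min d 1" for x y
  proof (cases "norm x \<le> R \<or> norm y \<le> R")
    case True
    have "norm x \<le> norm y + dist y x" "norm y \<le> norm x + dist y x"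
      using norm_triangle_sub[of x y] norm_triangle_sub[of y x]
      by (simp_all add: dist_norm norm_minus_commute)
    with True xy have "x \<in> cball 0 (R + 1)" "y \<in> cball 0 (R + 1)"
      by auto
    with xy d(2) show ?thesis by auto
  next
    case False
    then have "x \<notin> K" "y \<notin> K"
      using R by auto
    then have "f x = 0" "f y = 0"
      using zero by auto
    with \<open>e > 0\<close> show ?thesis by simp
  qed
  moreover have "min d 1 > 0"
    using d(1) by simp
  ultimately show "\<exists>d>0. \<forall>x\<in>UNIV. \<forall>y\<in>UNIV. dist y x < d \<longrightarrow> dist (f y) (f x) < e"
    by blast
qed

lemma first_order_estimate_uniform:
  assumes \<psi>: "has_continuous_gradient \<psi> g" and K: "compact (tsupport \<psi>)" and "e > 0"
  obtains d where "d > 0" "\<And>y h. norm h < d \<Longrightarrow> \<bar>\<psi> (y + h) - \<psi> y - g y \<bullet> h\<bar> \<le> e * norm h"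
proof -
  have "uniformly_continuous_on UNIV g"
    using \<psi> K gradient_eq_0_outside_tsupport[OF \<psi>] unfolding has_continuous_gradient_def
    by (intro uniformly_continuous_on_compact_support) auto
  then obtain d where d: "d > 0" "\<forall>y\<in>UNIV. \<forall>z\<in>UNIV. dist z y < d \<longrightarrow> dist (g z) (g y) < e"
    using \<open>e > 0\<close> unfolding uniformly_continuous_on_def by blast
  have "\<bar>\<psi> (y + h) - \<psi> y - g y \<bullet> h\<bar> \<le> e * norm h" if h: "norm h < d" for y h
  proof -
    define f where "f t = \<psi> (y + t *\<^sub>R h) - t * (g y \<bullet> h)" for t :: real
    have f': "(f has_derivative (\<lambda>s. s * ((g (y + t *\<^sub>R h) - g y) \<bullet> h))) (at t)" for t
    proof -
      have "((\<lambda>t. y + t *\<^sub>R h) has_derivative (\<lambda>s. s *\<^sub>R h)) (at t)"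
        by (auto intro!: derivative_eq_intros)
      moreover have "(\<psi> has_derivative (\<lambda>k. g (y + t *\<^sub>R h) \<bullet> k)) (at (y + t *\<^sub>R h))"
        using \<psi> unfolding has_continuous_gradient_def by blast
      ultimately have "((\<lambda>t. \<psi> (y + t *\<^sub>R h)) has_derivative (\<lambda>s. g (y + t *\<^sub>R h) \<bullet> (s *\<^sub>R h))) (at t)"
        by (rule has_derivative_compose)
      moreover have "((\<lambda>t. t * (g y \<bullet> h)) has_derivative (\<lambda>s. s * (g y \<bullet> h))) (at t)"
        by (auto intro!: derivative_eq_intros)
      ultimately show ?thesis
        unfolding f_def
        by (rule has_derivative_eq_rhs[OF has_derivative_diff]) (simp add: fun_eq_iff algebra_simps inner_diff_left)
    qed
    have "continuous_on {0..1} f"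
      using has_derivative_continuous[OF f'] by (intro continuous_at_imp_continuous_on) blast
    from mvt_general[OF zero_less_one this f']
    have "\<exists>t\<in>{0<..<1}. norm (f 1 - f 0) \<le> norm ((1 - 0) * ((g (y + t *\<^sub>R h) - g y) \<bullet> h))" .
    then obtain t where t: "t \<in> {0<..<1}" "\<bar>f 1 - f 0\<bar> \<le> \<bar>(g (y + t *\<^sub>R h) - g y) \<bullet> h\<bar>"
      by auto
    have "t * norm h \<le> norm h"
      using t(1) by (intro mult_left_le_one_le) auto
    with t(1) h have "dist (y + t *\<^sub>R h) y < d"
      by (simp add: dist_norm)
    then have "dist (g (y + t *\<^sub>R h)) (g y) < e"
      using d(2) by blast
    then have "norm (g (y + t *\<^sub>R h) - g y) \<le> e"
      by (simp add: dist_norm)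
    from mult_right_mono[OF this norm_ge_zero[of h]]
    have "\<bar>(g (y + t *\<^sub>R h) - g y) \<bullet> h\<bar> \<le> e * norm h"
      using Cauchy_Schwarz_ineq2[of "g (y + t *\<^sub>R h) - g y" h] by linarith
    moreover have "f 1 - f 0 = \<psi> (y + h) - \<psi> y - g y \<bullet> h"
      by (simp add: f_def)
    ultimately show ?thesis
      using t(2) by linarith
  qed
  with d(1) show ?thesis using that by blast
qed

text \<open>Splitting the shift by \<open>v\<close> into \<open>n\<close> steps of size \<open>v / n\<close> turns the first-order estimate
  into a Riemann sum of the gradient along the segment from \<open>x - v\<close> to \<open>x\<close>.\<close>

lemma shift_difference_riemann_sum:
  assumes \<psi>: "has_continuous_gradient \<psi> g" and K: "compact (tsupport \<psi>)" and "e > 0"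
  obtains n :: nat where "n > 0"
    "\<And>x. \<bar>\<psi> (x - v) - \<psi> x + (\<Sum>k<n. g (x - (real k / real n) *\<^sub>R v) \<bullet> v) / real n\<bar> \<le> e * norm v"
proof -
  obtain d where d: "d > 0" "\<And>y h. norm h < d \<Longrightarrow> \<bar>\<psi> (y + h) - \<psi> y - g y \<bullet> h\<bar> \<le> e * norm h"
    using first_order_estimate_uniform[OF \<psi> K \<open>e > 0\<close>] by blast
  define n where "n = nat \<lceil>norm v / d\<rceil> + 1"
  have n: "n > 0"
    unfolding n_def by simp
  have "norm v / d < real n"
    unfolding n_def by linarith
  with n d(1) have n_step: "norm v / real n < d"
    by (simp add: field_simps)
  define a where "a k = (real k / real n) *\<^sub>R v" for k
  have step: "x - a (Suc k) = (x - a k) + (- v /\<^sub>R real n)" for x k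
    by (simp add: a_def add_divide_distrib scaleR_add_left algebra_simps inverse_eq_divide)
  have "\<bar>\<psi> (x - v) - \<psi> x + (\<Sum>k<n. g (x - a k) \<bullet> v) / real n\<bar> \<le> e * norm v" for x
  proof -
    define R where "R k = \<psi> (x - a (Suc k)) - \<psi> (x - a k) - g (x - a k) \<bullet> (- v /\<^sub>R real n)" for k
    have h: "norm (- v /\<^sub>R real n) = norm v / real n"
      using n by (simp add: field_simps)
    have R_bound: "\<bar>R k\<bar> \<le> e * (norm v / real n)" for k
    proof -
      have "\<bar>\<psi> (x - a k + - v /\<^sub>R real n) - \<psi> (x - a k) - g (x - a k) \<bullet> (- v /\<^sub>R real n)\<bar>
          \<le> e * norm (- v /\<^sub>R real n)"
        using n_step h by (intro d(2)) simp
      then show ?thesis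
        unfolding R_def step h .
    qed
    have "\<bar>\<Sum>k<n. R k\<bar> \<le> (\<Sum>k<n. \<bar>R k\<bar>)"
      by (rule sum_abs)
    also have "\<dots> \<le> (\<Sum>k<n. e * (norm v / real n))"
      by (rule sum_mono) (rule R_bound)
    also have "\<dots> = e * norm v"
      using n by simp
    finally have "\<bar>\<Sum>k<n. R k\<bar> \<le> e * norm v" .
    moreover have "(\<Sum>k<n. R k) = \<psi> (x - v) - \<psi> x + (\<Sum>k<n. g (x - a k) \<bullet> v) / real n"
    proof -
      have "(\<Sum>k<n. \<psi> (x - a (Suc k)) - \<psi> (x - a k)) = \<psi> (x - a n) - \<psi> (x - a 0)"
        by (rule sum_lessThan_telescope)
      also have "\<dots> = \<psi> (x - v) - \<psi> x"
        using n by (simp add: a_def)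
      finally have "(\<Sum>k<n. \<psi> (x - a (Suc k)) - \<psi> (x - a k)) = \<psi> (x - v) - \<psi> x" .
      moreover have "R k = (\<psi> (x - a (Suc k)) - \<psi> (x - a k)) + g (x - a k) \<bullet> v / real n" for k
        by (simp add: R_def inner_minus_right divide_inverse mult.commute)
      ultimately show ?thesis
        by (simp add: sum.distrib sum_divide_distrib)
    qed
    ultimately show ?thesis by simp
  qed
  with n(1) show ?thesis using that unfolding a_def by blast
qed

lemma test_fun_uminus:
  assumes "test_fun U \<phi> g"
  shows "test_fun U (\<lambda>x. - \<phi> x) (\<lambda>x. - g x)"
proof -
  have "has_continuous_gradient (\<lambda>x. (- 1) * \<phi> x) (\<lambda>x. (- 1) *\<^sub>R g x)"
    using assms unfolding test_fun_iff by (blast intro: has_continuous_gradient_cmult)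
  moreover have "tsupport (\<lambda>x. - \<phi> x) = tsupport \<phi>"
    unfolding tsupport_def by simp
  ultimately show ?thesis
    using assms unfolding test_fun_iff by simp
qed

lemma test_fun_average:
  assumes \<psi>: "has_continuous_gradient \<psi> g" and K: "compact (tsupport \<psi>)"
    and bound: "\<And>x. \<bar>\<psi> x\<bar> \<le> 1" and "n > 0"
    and U: "\<And>k. k < n \<Longrightarrow> (+) (a k) ` tsupport \<psi> \<subseteq> U"
  shows "test_fun U (\<lambda>x. (1 / real n) * (\<Sum>k<n. \<psi> (x - a k)))
                    (\<lambda>x. (1 / real n) *\<^sub>R (\<Sum>k<n. g (x - a k)))"
  unfolding test_fun_iff
proof (intro conjI allI)
  show "has_continuous_gradient (\<lambda>x. (1 / real n) * (\<Sum>k<n. \<psi> (x - a k)))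
                                (\<lambda>x. (1 / real n) *\<^sub>R (\<Sum>k<n. g (x - a k)))"
    by (intro has_continuous_gradient_cmult has_continuous_gradient_sum
        has_continuous_gradient_translate[OF \<psi>])
  define C where "C = (\<Union>k<n. (+) (a k) ` tsupport \<psi>)"
  have nonzero: "{x. (1 / real n) * (\<Sum>k<n. \<psi> (x - a k)) \<noteq> 0} \<subseteq> C"
  proof
    fix x assume "x \<in> {x. (1 / real n) * (\<Sum>k<n. \<psi> (x - a k)) \<noteq> 0}"
    then have "(\<Sum>k<n. \<psi> (x - a k)) \<noteq> 0"
      by simp
    then have "\<not> (\<forall>k\<in>{..<n}. \<psi> (x - a k) = 0)"
      using sum.neutral[of "{..<n}" "\<lambda>k. \<psi> (x - a k)"] by blast
    then obtain k where "k < n" "\<psi> (x - a k) \<noteq> 0"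
      by blast
    then have "x - a k \<in> tsupport \<psi>"
      using eq_0_outside_tsupport by blast
    then have "x \<in> (+) (a k) ` tsupport \<psi>"
      by (rule rev_image_eqI) simp
    with \<open>k < n\<close> show "x \<in> C"
      unfolding C_def by blast
  qed
  have "compact C"
    unfolding C_def using K by (intro compact_UN finite_lessThan compact_translation)
  note support = tsupport_subset_compact[OF nonzero this]
  then show "compact (tsupport (\<lambda>x. (1 / real n) * (\<Sum>k<n. \<psi> (x - a k))))"
    by blast
  have "C \<subseteq> U"
    unfolding C_def using U by blast
  with support show "tsupport (\<lambda>x. (1 / real n) * (\<Sum>k<n. \<psi> (x - a k))) \<subseteq> U"
    by blast
  fix x
  have "\<bar>\<Sum>k<n. \<psi> (x - a k)\<bar> \<le> (\<Sum>k<n. \<bar>\<psi> (x - a k)\<bar>)"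
    by (rule sum_abs)
  also have "\<dots> \<le> (\<Sum>k<n. 1)"
    by (rule sum_mono) (rule bound)
  finally show "\<bar>(1 / real n) * (\<Sum>k<n. \<psi> (x - a k))\<bar> \<le> 1"
    using \<open>n > 0\<close> by (simp add: abs_mult)
qed

definition pos_sq :: "real \<Rightarrow> real" where
  "pos_sq s = (max 0 s)\<^sup>2"

lemma pos_sq_has_real_derivative: "(pos_sq has_real_derivative 2 * max 0 s) (at s)"
proof -
  consider "s = 0" | "s > 0" | "s < 0" by linarith
  then show ?thesis
  proof cases
    case 1
    have "((\<lambda>h. (pos_sq (0 + h) - pos_sq 0) / h) \<longlongrightarrow> 0) (at 0)"
    proof (rule Lim_null_comparison)
      show "\<forall>\<^sub>F h in at 0. norm ((pos_sq (0 + h) - pos_sq 0) / h) \<le> \<bar>h\<bar>"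
      proof (rule always_eventually, rule allI)
        fix h :: real
        show "norm ((pos_sq (0 + h) - pos_sq 0) / h) \<le> \<bar>h\<bar>"
          by (cases "h > 0") (auto simp: pos_sq_def power2_eq_square abs_mult)
      qed
      show "((\<lambda>h. \<bar>h\<bar>) \<longlongrightarrow> 0) (at (0::real))"
        using tendsto_rabs[OF tendsto_ident_at[of "0::real" UNIV]] by simp
    qed
    with 1 show ?thesis
      by (simp add: DERIV_def)
  next
    case 2
    have "((\<lambda>s. s\<^sup>2) has_real_derivative 2 * max 0 s) (at s)"
      using 2 by (auto intro!: derivative_eq_intros)
    then show ?thesis
      by (rule has_field_derivative_transform_within_open[OF _ open_greaterThan[of 0]])
        (use 2 in \<open>auto simp: pos_sq_def\<close>)
  next
    case 3
    have "((\<lambda>s. 0) has_real_derivative 2 * max 0 s) (at s)"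
      using 3 by simp
    then show ?thesis
      by (rule has_field_derivative_transform_within_open[OF _ open_lessThan[of 0]])
        (use 3 in \<open>auto simp: pos_sq_def\<close>)
  qed
qed

text \<open>A \<open>C\<^sup>1\<close> step from \<open>0\<close> (on \<open>s \<le> 0\<close>) to \<open>1\<close> (on \<open>s \<ge> 1\<close>), made of two parabolic arcs.\<close>

definition smooth_step :: "real \<Rightarrow> real" where
  "smooth_step s = 2 * pos_sq s - 4 * pos_sq (s - 1/2) + 2 * pos_sq (s - 1)"

lemma smooth_step_has_real_derivative:
  "(smooth_step has_real_derivative 4 * max 0 s - 8 * max 0 (s - 1/2) + 4 * max 0 (s - 1)) (at s)"
proof -
  have "((\<lambda>s. pos_sq (s - c)) has_real_derivative 2 * max 0 (s - c)) (at s)" for c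
  proof -
    have "((\<lambda>s. s - c) has_real_derivative 1) (at s)"
      by (auto intro!: derivative_eq_intros)
    from DERIV_chain2[OF pos_sq_has_real_derivative this] show ?thesis
      by simp
  qed
  from this[of 0] this[of "1/2"] this[of 1] show ?thesis
    unfolding smooth_step_def by (auto intro!: derivative_eq_intros)
qed

lemma smooth_step_eq_0: "s \<le> 0 \<Longrightarrow> smooth_step s = 0"
  by (simp add: smooth_step_def pos_sq_def)

lemma smooth_step_eq_1: "1 \<le> s \<Longrightarrow> smooth_step s = 1"
  by (simp add: smooth_step_def pos_sq_def power2_eq_square algebra_simps)

lemma smooth_step_bounds: "0 \<le> smooth_step s \<and> smooth_step s \<le> 1"
proof -
  consider "s \<le> 0" | "0 < s" "s \<le> 1/2" | "1/2 < s" "s < 1" | "1 \<le> s" by linarith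
  then show ?thesis
  proof cases
    case 2
    then have "smooth_step s = 2 * s\<^sup>2" "s\<^sup>2 \<le> (1/2)\<^sup>2"
      by (auto simp: smooth_step_def pos_sq_def intro!: power_mono)
    then show ?thesis by (simp add: power2_eq_square)
  next
    case 3
    then have "smooth_step s = 1 - 2 * (1 - s)\<^sup>2"
      by (simp add: smooth_step_def pos_sq_def power2_eq_square algebra_simps)
    moreover have "(1 - s)\<^sup>2 \<le> (1/2)\<^sup>2"
      using 3 by (intro power_mono) auto
    ultimately show ?thesis by (simp add: power2_eq_square)
  qed (simp_all add: smooth_step_eq_0 smooth_step_eq_1)
qed

lemma power2_le_pos_sq: "0 \<le> a \<Longrightarrow> a \<le> s \<Longrightarrow> a\<^sup>2 \<le> pos_sq s"
  unfolding pos_sq_def by (intro power_mono) auto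

definition bump :: "'a::euclidean_space \<Rightarrow> real \<Rightarrow> 'a \<Rightarrow> real" where
  "bump c r x = pos_sq (r\<^sup>2 - (x - c) \<bullet> (x - c))"

lemma has_continuous_gradient_bump:
  "has_continuous_gradient (bump c r)
     (\<lambda>x. (2 * max 0 (r\<^sup>2 - (x - c) \<bullet> (x - c))) *\<^sub>R ((- 2) *\<^sub>R (x - c)))"
proof -
  have "has_continuous_gradient (\<lambda>x. r\<^sup>2 - (x - c) \<bullet> (x - c)) (\<lambda>x. (- 2) *\<^sub>R (x - c))"
    unfolding has_continuous_gradient_def
  proof (intro conjI allI)
    fix x
    have "((\<lambda>x. r\<^sup>2 - (x - c) \<bullet> (x - c)) has_derivative (\<lambda>h. - (2 * ((x - c) \<bullet> h)))) (at x)"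
      by (auto intro!: derivative_eq_intros simp: inner_commute)
    then show "((\<lambda>x. r\<^sup>2 - (x - c) \<bullet> (x - c)) has_derivative (\<lambda>h. ((- 2) *\<^sub>R (x - c)) \<bullet> h)) (at x)"
      by simp
    show "continuous_on UNIV (\<lambda>x. (- 2) *\<^sub>R (x - c))"
      by (intro continuous_intros)
  qed
  moreover have "continuous_on UNIV (\<lambda>s::real. 2 * max 0 s)"
    by (intro continuous_on_mult continuous_on_const continuous_on_max continuous_on_id)
  ultimately show ?thesis
    unfolding bump_def by (rule has_continuous_gradient_compose[OF pos_sq_has_real_derivative, rotated])
qed

lemma bump_nonneg: "0 \<le> bump c r x"
  by (simp add: bump_def pos_sq_def)

lemma bump_pos_iff:
  assumes "0 \<le> r"
  shows "0 < bump c r x \<longleftrightarrow> dist x c < r"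
proof -
  have "(x - c) \<bullet> (x - c) = (dist x c)\<^sup>2"
    by (simp add: dist_norm power2_norm_eq_inner)
  then have "0 < bump c r x \<longleftrightarrow> (dist x c)\<^sup>2 < r\<^sup>2"
    by (auto simp: bump_def pos_sq_def max_def)
  also have "\<dots> \<longleftrightarrow> dist x c < r"
    using assms by (auto intro: power_strict_mono power2_less_imp_less)
  finally show ?thesis .
qed

lemma bump_ge:
  assumes "dist x c \<le> r / 2"
  shows "(3 * r\<^sup>2 / 4)\<^sup>2 \<le> bump c r x"
proof -
  have "(x - c) \<bullet> (x - c) = (dist x c)\<^sup>2"
    by (simp add: dist_norm power2_norm_eq_inner)
  also have "\<dots> \<le> (r / 2)\<^sup>2"
    using assms by (intro power_mono) auto
  finally have "3 * r\<^sup>2 / 4 \<le> r\<^sup>2 - (x - c) \<bullet> (x - c)"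
    by (simp add: power_divide)
  then show ?thesis
    unfolding bump_def by (intro power2_le_pos_sq) auto
qed

text \<open>A scaled sum of bumps over a finite cover of \<open>K\<close> by balls of half the radius.\<close>

lemma exists_C1_cover_function:
  fixes K U :: "'a::euclidean_space set"
  assumes K: "compact K" and U: "open U" "K \<subseteq> U"
  obtains F g C where "has_continuous_gradient F g" "compact C" "C \<subseteq> U"
    "\<And>x. x \<in> K \<Longrightarrow> 1 \<le> F x" "\<And>x. 0 < F x \<Longrightarrow> x \<in> C"
proof -
  obtain e where e: "e > 0" "(\<Union>x\<in>K. cball x e) \<subseteq> U"
    using compact_subset_open_imp_cball_epsilon_subset[OF K U] by blast
  have "K \<subseteq> (\<Union>c\<in>K. ball c (e/2))"
    using e(1) by force
  then obtain I where I: "I \<subseteq> K" "finite I" "K \<subseteq> (\<Union>c\<in>I. ball c (e/2))"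
    using compactE_image[OF K, of K "\<lambda>c. ball c (e/2)"] by blast
  define k where "k = 16 / (9 * e ^ 4)"
  have k: "0 < k" "k * (3 * e\<^sup>2 / 4)\<^sup>2 = 1"
    unfolding k_def using e(1) by (simp_all add: power2_eq_square power4_eq_xxxx)
  define F where "F x = k * (\<Sum>c\<in>I. bump c e x)" for x
  have "has_continuous_gradient F (\<lambda>x. k *\<^sub>R (\<Sum>c\<in>I.
      (2 * max 0 (e\<^sup>2 - (x - c) \<bullet> (x - c))) *\<^sub>R ((- 2) *\<^sub>R (x - c))))"
    unfolding F_def by (intro has_continuous_gradient_cmult has_continuous_gradient_sum
        has_continuous_gradient_bump)
  moreover have "compact (\<Union>c\<in>I. cball c e)"
    using I(2) by (intro compact_UN) auto
  moreover have "(\<Union>c\<in>I. cball c e) \<subseteq> U"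
    using I(1) e(2) by blast
  moreover have "1 \<le> F x" if x: "x \<in> K" for x
  proof -
    obtain c where c: "c \<in> I" "dist x c < e/2"
      using I(3) x by (auto simp: dist_commute)
    then have "(3 * e\<^sup>2 / 4)\<^sup>2 \<le> (\<Sum>c\<in>I. bump c e x)"
      using bump_ge[of x c e] member_le_sum[OF c(1), of "\<lambda>c. bump c e x"] I(2)
      by (simp add: bump_nonneg)
    then have "k * (3 * e\<^sup>2 / 4)\<^sup>2 \<le> F x"
      unfolding F_def using k(1) by (intro mult_left_mono) auto
    with k(2) show ?thesis
      by simp
  qed
  moreover have "x \<in> (\<Union>c\<in>I. cball c e)" if pos: "0 < F x" for x
  proof -
    have "0 < (\<Sum>c\<in>I. bump c e x)"
      using pos k(1) zero_less_mult_pos unfolding F_def by blast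
    then obtain c where c: "c \<in> I" "0 < bump c e x"
      using sum_nonpos[of I "\<lambda>c. bump c e x"] by (meson not_le)
    then have "x \<in> cball c e"
      using bump_pos_iff[of e c x] e(1) by (simp add: dist_commute)
    with c(1) show ?thesis
      by blast
  qed
  ultimately show ?thesis
    using that by blast
qed

lemma exists_C1_cutoff:
  fixes K U :: "'a::euclidean_space set"
  assumes K: "compact K" and U: "open U" "K \<subseteq> U"
  obtains \<theta> g where "has_continuous_gradient \<theta> g" "compact (tsupport \<theta>)" "tsupport \<theta> \<subseteq> U"
    "\<And>x. 0 \<le> \<theta> x \<and> \<theta> x \<le> 1" "\<And>x. x \<in> K \<Longrightarrow> \<theta> x = 1"
proof -
  obtain F g C where F: "has_continuous_gradient F g" "compact C" "C \<subseteq> U"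
    "\<And>x. x \<in> K \<Longrightarrow> 1 \<le> F x" "\<And>x. 0 < F x \<Longrightarrow> x \<in> C"
    using exists_C1_cover_function[OF assms] by blast
  define \<theta> where "\<theta> x = smooth_step (F x)" for x
  have "continuous_on UNIV (\<lambda>s::real. 4 * max 0 s - 8 * max 0 (s - 1/2) + 4 * max 0 (s - 1))"
    by (intro continuous_on_add continuous_on_diff continuous_on_mult continuous_on_const
        continuous_on_max continuous_on_id)
  from has_continuous_gradient_compose[OF smooth_step_has_real_derivative this F(1)]
  have grad: "has_continuous_gradient \<theta>
      (\<lambda>x. (4 * max 0 (F x) - 8 * max 0 (F x - 1/2) + 4 * max 0 (F x - 1)) *\<^sub>R g x)"
    unfolding \<theta>_def .
  have "{x. \<theta> x \<noteq> 0} \<subseteq> C"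
  proof
    fix x assume "x \<in> {x. \<theta> x \<noteq> 0}"
    then have "0 < F x"
      unfolding \<theta>_def using smooth_step_eq_0[of "F x"] by fastforce
    then show "x \<in> C"
      by (rule F(5))
  qed
  note support = tsupport_subset_compact[OF this F(2)]
  show ?thesis
  proof (rule that[OF grad support(2)])
    show "tsupport \<theta> \<subseteq> U"
      using support(1) F(3) by (rule order_trans)
    show "0 \<le> \<theta> x \<and> \<theta> x \<le> 1" for x
      unfolding \<theta>_def by (rule smooth_step_bounds)
    show "\<theta> x = 1" if "x \<in> K" for x
      unfolding \<theta>_def using F(4)[OF that] by (rule smooth_step_eq_1)
  qed
qed

lemma exists_compact_inner_approx:
  fixes S :: "'a::euclidean_space set"
  assumes S: "S \<in> lmeasurable" "bounded S" and "e > 0"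
  obtains T where "compact T" "T \<subseteq> S" "measure lebesgue S \<le> measure lebesgue T + e"
proof -
  obtain T where T: "closed T" "T \<subseteq> S" "S - T \<in> lmeasurable" "emeasure lebesgue (S - T) < ennreal e"
    using sets_lebesgue_inner_closed[OF fmeasurableD[OF S(1)] \<open>e > 0\<close>] by blast
  have "measure lebesgue (S - T) < e"
    using T(3,4) \<open>e > 0\<close> by (simp add: emeasure_eq_measure2 ennreal_less_iff)
  moreover have "measure lebesgue (S - T) = measure lebesgue S - measure lebesgue T"
    using T(1,2) S(1) by (intro measurable_measure_Diff) (auto simp: borel_closed)
  moreover have "compact T"
    using T(1) bounded_subset[OF S(2) T(2)] by (simp add: compact_eq_bounded_closed)
  ultimately show ?thesis
    using that T(2) by (metis add.commute diff_less_eq less_imp_le)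
qed

lemma exists_open_outer_approx:
  fixes K U :: "'a::euclidean_space set"
  assumes K: "compact K" and U: "open U" "K \<subseteq> U" and "e > 0"
  obtains V where "open V" "K \<subseteq> V" "V \<subseteq> U" "V - K \<in> lmeasurable" "measure lebesgue (V - K) < e"
proof -
  have "K \<in> sets lebesgue"
    using K by (simp add: compact_imp_closed borel_closed)
  then obtain T where T: "open T" "K \<subseteq> T" "T - K \<in> lmeasurable" "emeasure lebesgue (T - K) < ennreal e"
    using sets_lebesgue_outer_open[OF _ \<open>e > 0\<close>] by blast
  have sets: "T \<inter> U - K \<in> sets lebesgue"
    using T(1) U(1) K by (intro sets.Diff) (auto simp: borel_open compact_imp_closed borel_closed)
  then have "T \<inter> U - K \<in> lmeasurable"
    by (rule fmeasurableI2[OF T(3), rotated]) auto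
  moreover have "measure lebesgue (T \<inter> U - K) \<le> measure lebesgue (T - K)"
    using sets T(3) by (intro measure_mono_fmeasurable) auto
  moreover have "measure lebesgue (T - K) < e"
    using T(3,4) \<open>e > 0\<close> by (simp add: emeasure_eq_measure2 ennreal_less_iff)
  ultimately show ?thesis
    using that[of "T \<inter> U"] T(1,2) U by auto
qed

lemma exists_C1_sign_function:
  fixes K1 K2 U :: "'a::euclidean_space set"
  assumes K: "compact K1" "compact K2" "K1 \<inter> K2 = {}" and U: "open U" "K1 \<union> K2 \<subseteq> U" and "e > 0"
  obtains \<psi> g where "has_continuous_gradient \<psi> g" "compact (tsupport \<psi>)" "tsupport \<psi> \<subseteq> U"
    "\<And>x. \<bar>\<psi> x\<bar> \<le> 1" "\<And>x. x \<in> K1 \<Longrightarrow> \<psi> x = 1" "\<And>x. x \<in> K2 \<Longrightarrow> \<psi> x = - 1"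
    "{x. \<psi> x \<noteq> 0} - (K1 \<union> K2) \<in> lmeasurable" "measure lebesgue ({x. \<psi> x \<noteq> 0} - (K1 \<union> K2)) < e"
proof -
  obtain V1 V2 where V: "open V1" "open V2" "K1 \<subseteq> V1" "K2 \<subseteq> V2" "V1 \<inter> V2 = {}"
    using separation_normal_compact[OF K(1) compact_imp_closed[OF K(2)] K(3)] by metis
  obtain O1 where O1: "open O1" "K1 \<subseteq> O1" "O1 \<subseteq> U \<inter> V1" "O1 - K1 \<in> lmeasurable"
    "measure lebesgue (O1 - K1) < e / 2"
    using exists_open_outer_approx[OF K(1), of "U \<inter> V1" "e / 2"] U V(1,3) \<open>e > 0\<close> by auto
  obtain O2 where O2: "open O2" "K2 \<subseteq> O2" "O2 \<subseteq> U \<inter> V2" "O2 - K2 \<in> lmeasurable"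
    "measure lebesgue (O2 - K2) < e / 2"
    using exists_open_outer_approx[OF K(2), of "U \<inter> V2" "e / 2"] U V(2,4) \<open>e > 0\<close> by auto
  obtain \<theta>1 g1 where \<theta>1: "has_continuous_gradient \<theta>1 g1" "compact (tsupport \<theta>1)" "tsupport \<theta>1 \<subseteq> O1"
    "\<And>x. 0 \<le> \<theta>1 x \<and> \<theta>1 x \<le> 1" "\<And>x. x \<in> K1 \<Longrightarrow> \<theta>1 x = 1"
    using exists_C1_cutoff[OF K(1) O1(1,2)] by blast
  obtain \<theta>2 g2 where \<theta>2: "has_continuous_gradient \<theta>2 g2" "compact (tsupport \<theta>2)" "tsupport \<theta>2 \<subseteq> O2"
    "\<And>x. 0 \<le> \<theta>2 x \<and> \<theta>2 x \<le> 1" "\<And>x. x \<in> K2 \<Longrightarrow> \<theta>2 x = 1"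
    using exists_C1_cutoff[OF K(2) O2(1,2)] by blast
  define \<psi> where "\<psi> x = \<theta>1 x - \<theta>2 x" for x
  have disjoint: "O1 \<inter> O2 = {}"
    using O1(3) O2(3) V(5) by blast
  have outside1: "\<theta>1 x = 0" if "x \<notin> O1" for x
    using that \<theta>1(3) eq_0_outside_tsupport by blast
  have outside2: "\<theta>2 x = 0" if "x \<notin> O2" for x
    using that \<theta>2(3) eq_0_outside_tsupport by blast
  have grad: "has_continuous_gradient \<psi> (\<lambda>x. g1 x - g2 x)"
    unfolding \<psi>_def using \<theta>1(1) \<theta>2(1) by (rule has_continuous_gradient_diff)
  have "{x. \<psi> x \<noteq> 0} \<subseteq> tsupport \<theta>1 \<union> tsupport \<theta>2"
    unfolding \<psi>_def using eq_0_outside_tsupport[of _ \<theta>1] eq_0_outside_tsupport[of _ \<theta>2] by force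
  note support = tsupport_subset_compact[OF this compact_Un[OF \<theta>1(2) \<theta>2(2)]]
  have nonzero: "{x. \<psi> x \<noteq> 0} - (K1 \<union> K2) \<subseteq> (O1 - K1) \<union> (O2 - K2)"
    unfolding \<psi>_def using outside1 outside2 by force
  have open_nonzero: "open {x. \<psi> x \<noteq> 0}"
    using has_continuous_gradient_imp_continuous[OF grad] by (intro open_Collect_neq) auto
  have sets: "{x. \<psi> x \<noteq> 0} - (K1 \<union> K2) \<in> sets lebesgue"
    using open_nonzero K(1,2) by (intro sets.Diff) (auto simp: borel_open compact_imp_closed borel_closed)
  have union: "(O1 - K1) \<union> (O2 - K2) \<in> lmeasurable"
    using O1(4) O2(4) by (rule fmeasurable.Un)
  show ?thesis
  proof (rule that[OF grad support(2)])
    show "tsupport \<psi> \<subseteq> U"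
      using support(1) \<theta>1(3) \<theta>2(3) O1(3) O2(3) by blast
    show "\<bar>\<psi> x\<bar> \<le> 1" for x
      using \<theta>1(4)[of x] \<theta>2(4)[of x] outside1[of x] outside2[of x] disjoint
      unfolding \<psi>_def by (cases "x \<in> O1") auto
    show "\<psi> x = 1" if "x \<in> K1" for x
      using that \<theta>1(5) outside2[of x] O1(2) disjoint unfolding \<psi>_def by auto
    show "\<psi> x = - 1" if "x \<in> K2" for x
      using that \<theta>2(5) outside1[of x] O2(2) disjoint unfolding \<psi>_def by auto
    show "{x. \<psi> x \<noteq> 0} - (K1 \<union> K2) \<in> lmeasurable"
      by (rule fmeasurableI2[OF union nonzero sets])
    have "measure lebesgue ({x. \<psi> x \<noteq> 0} - (K1 \<union> K2)) \<le> measure lebesgue ((O1 - K1) \<union> (O2 - K2))"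
      by (rule measure_mono_fmeasurable[OF nonzero sets union])
    also have "\<dots> \<le> measure lebesgue (O1 - K1) + measure lebesgue (O2 - K2)"
      using O1(4) O2(4) by (intro measure_Un_le) auto
    finally show "measure lebesgue ({x. \<psi> x \<noteq> 0} - (K1 \<union> K2)) < e"
      using O1(5) O2(5) by linarith
  qed
qed

lemma exists_pos_mult_le:
  fixes c e :: real
  assumes "0 \<le> c" "0 < e"
  obtains \<eta> where "\<eta> > 0" "\<eta> * c \<le> e"
proof
  show "e / (c + 1) > 0"
    using assms by simp
  have "e / (c + 1) * c \<le> e / (c + 1) * (c + 1)"
    using assms by (intro mult_left_mono) auto
  then show "e / (c + 1) * c \<le> e"
    using assms by simp
qed

lemma integrable_indicator_mult_continuous:
  fixes f :: "'a::euclidean_space \<Rightarrow> real"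
  assumes S: "S \<in> sets lebesgue" and f: "continuous_on UNIV f"
    and B: "bounded B" and zero: "\<And>x. x \<notin> B \<Longrightarrow> f x = 0"
  shows "integrable lebesgue (\<lambda>x. indicator S x * f x)"
proof -
  obtain r where r: "\<forall>x\<in>B. norm x \<le> r"
    using B unfolding bounded_iff by blast
  have "compact (f ` cball 0 r)"
    by (rule compact_continuous_image[OF continuous_on_subset[OF f]]) auto
  then have "bounded (f ` cball 0 r)"
    by (rule compact_imp_bounded)
  then obtain c where c: "\<forall>y\<in>f ` cball 0 r. norm y \<le> c"
    unfolding bounded_iff by blast
  have bound: "norm (indicator S x * f x) \<le> c" if "x \<in> cball 0 r" for x
  proof -
    have "norm (f x) \<le> c"
      using c that by blast
    then show ?thesis
      by (cases "x \<in> S") auto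
  qed
  have vanish: "indicator S x * f x = 0" if "x \<notin> cball 0 r" for x
  proof -
    have "x \<notin> B"
      using r that by auto
    then show ?thesis
      using zero by simp
  qed
  have "f \<in> borel_measurable lebesgue"
    using measurable_completion[of f lborel borel] borel_measurable_continuous_onI[OF f] by simp
  then have meas: "(\<lambda>x. indicator S x * f x) \<in> borel_measurable lebesgue"
    using S by (intro borel_measurable_times borel_measurable_indicator)
  show ?thesis
  proof (rule integrableI_bounded_set[where A = "cball 0 r" and B = c, OF _ meas])
    show "emeasure lebesgue (cball (0::'a) r) < \<infinity>"
      using emeasure_bounded_finite[of "cball (0::'a) r"] by (simp add: top.not_eq_extremum)
  qed (use bound vanish in auto)
qed

lemma abs_integral_le_measure:
  fixes f :: "'a::euclidean_space \<Rightarrow> real"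
  assumes f: "integrable lebesgue f" and B: "B \<in> lmeasurable"
    and le: "\<And>x. \<bar>f x\<bar> \<le> c * indicator B x"
  shows "\<bar>integral\<^sup>L lebesgue f\<bar> \<le> c * measure lebesgue B"
proof -
  have "integrable lebesgue (\<lambda>x. c * indicator B x)"
    using B by (intro integrable_mult_right integrable_real_indicator) (auto simp: fmeasurable_def)
  have "\<bar>integral\<^sup>L lebesgue f\<bar> \<le> integral\<^sup>L lebesgue (\<lambda>x. \<bar>f x\<bar>)"
    by (rule integral_abs_bound)
  also have "\<dots> \<le> integral\<^sup>L lebesgue (\<lambda>x. c * indicator B x)"
    by (rule integral_mono[OF integrable_abs[OF f] \<open>integrable lebesgue (\<lambda>x. c * indicator B x)\<close> le])
  also have "\<dots> = c * measure lebesgue B"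
    by simp
  finally show ?thesis .
qed

lemma abs_integral_indicator_mult_add_le:
  fixes f h :: "'a::euclidean_space \<Rightarrow> real"
  assumes S: "S \<in> sets lebesgue" and cont: "continuous_on UNIV f" "continuous_on UNIV h"
    and B: "B \<in> lmeasurable" "bounded B" and zero: "\<And>x. x \<notin> B \<Longrightarrow> f x = 0 \<and> h x = 0"
    and bound: "\<And>x. \<bar>f x + h x\<bar> \<le> c"
  shows "\<bar>integral\<^sup>L lebesgue (\<lambda>x. indicator S x * f x) + integral\<^sup>L lebesgue (\<lambda>x. indicator S x * h x)\<bar>
    \<le> c * measure lebesgue B"
proof -
  have f: "integrable lebesgue (\<lambda>x. indicator S x * f x)"
    using zero by (intro integrable_indicator_mult_continuous[OF S cont(1) B(2)]) blast
  have h: "integrable lebesgue (\<lambda>x. indicator S x * h x)"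
    using zero by (intro integrable_indicator_mult_continuous[OF S cont(2) B(2)]) blast
  have "\<bar>indicator S x * f x + indicator S x * h x\<bar> \<le> c * indicator B x" for x
  proof (cases "x \<in> B")
    case True
    have "\<bar>indicator S x * (f x + h x)\<bar> \<le> c"
      using bound[of x] by (cases "x \<in> S") auto
    with True show ?thesis
      by (simp add: distrib_left)
  qed (use zero in simp)
  from abs_integral_le_measure[OF Bochner_Integration.integrable_add[OF f h] B(1) this]
  show ?thesis
    using f h by simp
qed

lemma lebesgue_integral_translate:
  fixes f :: "'a::euclidean_space \<Rightarrow> real"
  assumes f: "f \<in> borel_measurable lebesgue"
  shows "integral\<^sup>L lebesgue (\<lambda>x. f (x + a)) = integral\<^sup>L lebesgue f"
proof -
  have translation: "(\<lambda>x::'a. a + (\<Sum>j\<in>Basis. (1 * (x \<bullet> j)) *\<^sub>R j)) = (\<lambda>x. a + x)"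
    by (simp add: euclidean_representation)
  have "lebesgue = distr lebesgue lebesgue (\<lambda>x::'a. a + x)"
    using lebesgue_affine_euclidean[of "\<lambda>_. 1" a] unfolding translation by (simp add: density_1)
  moreover have "(\<lambda>x::'a. a + x) \<in> lebesgue \<rightarrow>\<^sub>M lebesgue"
    using lebesgue_affine_measurable[of "\<lambda>_. 1" a] unfolding translation by simp
  ultimately have "integral\<^sup>L lebesgue f = integral\<^sup>L lebesgue (\<lambda>x. f (a + x))"
    using integral_distr[of "\<lambda>x. a + x" lebesgue lebesgue f] f by simp
  then show ?thesis
    by (simp add: add.commute)
qed

lemma notin_tsupport_translate:
  assumes "\<forall>y\<in>tsupport \<psi>. norm y \<le> R" "R + norm v < norm x" "0 \<le> t" "t \<le> 1"
  shows "x - t *\<^sub>R v \<notin> tsupport \<psi>"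
proof
  assume "x - t *\<^sub>R v \<in> tsupport \<psi>"
  then have "norm (x - t *\<^sub>R v) \<le> R"
    using assms(1) by blast
  moreover have "norm (t *\<^sub>R v) \<le> norm v"
    using assms(3,4) by (simp add: mult_left_le_one_le)
  moreover have "norm x \<le> norm (t *\<^sub>R v) + norm (x - t *\<^sub>R v)"
    by (rule norm_triangle_sub)
  ultimately show False
    using assms(2) by linarith
qed

lemma set_integral_gradient_eq_integral:
  assumes "test_fun W \<phi> g"
  shows "(LINT x:W|lebesgue. indicator A x * (g x \<bullet> u)) = integral\<^sup>L lebesgue (\<lambda>x. indicator A x * (g x \<bullet> u))"
proof -
  have "indicator W x *\<^sub>R (indicator A x * (g x \<bullet> u)) = indicator A x * (g x \<bullet> u)" for x
  proof (cases "x \<in> W")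
    case False
    with assms have "g x = 0"
      unfolding test_fun_iff using gradient_eq_0_outside_tsupport by blast
    then show ?thesis by simp
  qed simp
  then have "(\<lambda>x. indicator W x *\<^sub>R (indicator A x * (g x \<bullet> u))) = (\<lambda>x. indicator A x * (g x \<bullet> u))"
    by (rule ext)
  then show ?thesis
    unfolding set_lebesgue_integral_def by (simp only:)
qed

lemma dir_var_eq_SUP_integral:
  "dir_var u A W
     = (SUP p \<in> {(\<phi>, g). test_fun W \<phi> g}. ereal (integral\<^sup>L lebesgue (\<lambda>x. indicator A x * (snd p x \<bullet> u))))"
  unfolding dir_var_def
  by (intro SUP_cong refl) (auto simp: set_integral_gradient_eq_integral)

lemma integral_gradient_le_dir_var:
  assumes "test_fun W \<phi> g"
  shows "ereal (integral\<^sup>L lebesgue (\<lambda>x. indicator A x * (g x \<bullet> u))) \<le> dir_var u A W"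
  unfolding dir_var_eq_SUP_integral using assms by (intro SUP_upper2[of "(\<phi>, g)"]) auto

lemma dir_var_nonneg: "0 \<le> dir_var u A W"
proof -
  have "test_fun W (\<lambda>_. 0) (\<lambda>_. 0)"
    by (simp add: test_fun_def)
  from integral_gradient_le_dir_var[OF this, of A u] show ?thesis
    by (simp add: zero_ereal_def)
qed

lemma abs_integral_gradient_le_dir_var:
  assumes "dir_var u A W = ereal M" and "test_fun W \<phi> g"
  shows "\<bar>integral\<^sup>L lebesgue (\<lambda>x. indicator A x * (g x \<bullet> u))\<bar> \<le> M"
proof -
  have "integral\<^sup>L lebesgue (\<lambda>x. indicator A x * (g x \<bullet> u)) \<le> M"
    using integral_gradient_le_dir_var[OF assms(2), of A u] assms(1) by simp
  moreover have "- integral\<^sup>L lebesgue (\<lambda>x. indicator A x * (g x \<bullet> u)) \<le> M"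
    using integral_gradient_le_dir_var[OF test_fun_uminus[OF assms(2)], of A u] assms(1) by simp
  ultimately show ?thesis by linarith
qed

locale measurable_set_in_window =
  fixes A W :: "'a::euclidean_space set"
  assumes A_sets: "A \<in> sets lebesgue" and W_bounded: "bounded W" and W_open: "open W"
begin

lemma exit_sets_lmeasurable:
  "exit_set A W v \<in> lmeasurable" "exit_set (- A) W v \<in> lmeasurable"
proof -
  have "- A \<in> sets lebesgue"
    using sets.compl_sets[OF A_sets] by (simp add: Compl_eq_Diff_UNIV)
  then show "exit_set A W v \<in> lmeasurable" "exit_set (- A) W v \<in> lmeasurable"
    using exit_set_lmeasurable W_bounded W_open A_sets by auto
qed

lemma norm_mult_sigma_cov:
  assumes "w \<noteq> 0"
  shows "norm w * sigma_cov w W A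
    = measure lebesgue (exit_set A W w) + measure lebesgue (exit_set (- A) W w)"
  using assms by (simp add: sigma_cov_eq_exit_sets[OF A_sets W_bounded W_open])

lemma integral_shift_difference:
  assumes \<psi>: "continuous_on UNIV \<psi>" and K: "compact (tsupport \<psi>)"
  shows "integrable lebesgue (\<lambda>y. (indicator A (y + v) - indicator A y) * \<psi> y)"
    and "integral\<^sup>L lebesgue (\<lambda>x. indicator A x * (\<psi> (x - v) - \<psi> x))
       = integral\<^sup>L lebesgue (\<lambda>y. (indicator A (y + v) - indicator A y) * \<psi> y)"
proof -
  have shifted: "indicator A (y + v) = indicator {y. y + v \<in> A} y" for y :: 'a
    by (simp add: indicator_def)
  have bounded: "bounded (tsupport \<psi>)" "bounded ((+) v ` tsupport \<psi>)"
    using K compact_translation compact_imp_bounded by blast+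
  have "\<psi> (x - v) = 0" if "x \<notin> (+) v ` tsupport \<psi>" for x
  proof -
    have "x - v \<notin> tsupport \<psi>"
      using that rev_image_eqI[of "x - v" "tsupport \<psi>" x "(+) v"] by auto
    then show ?thesis
      by (rule eq_0_outside_tsupport)
  qed
  then have i1: "integrable lebesgue (\<lambda>x. indicator A x * \<psi> (x - v))"
    using bounded(2)
    by (intro integrable_indicator_mult_continuous[OF A_sets] continuous_on_compose2[OF \<psi>]
        continuous_intros) auto
  have i2: "integrable lebesgue (\<lambda>x. indicator A x * \<psi> x)"
    using bounded(1) eq_0_outside_tsupport by (intro integrable_indicator_mult_continuous[OF A_sets \<psi>])
  have i3: "integrable lebesgue (\<lambda>y. indicator A (y + v) * \<psi> y)"
    unfolding shifted using bounded(1) eq_0_outside_tsupport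
    by (intro integrable_indicator_mult_continuous[OF translate_lebesgue_sets[OF A_sets] \<psi>])
  show "integrable lebesgue (\<lambda>y. (indicator A (y + v) - indicator A y) * \<psi> y)"
    using Bochner_Integration.integrable_diff[OF i3 i2] by (simp add: left_diff_distrib)
  have "integral\<^sup>L lebesgue (\<lambda>x. indicator A x * \<psi> (x - v))
      = integral\<^sup>L lebesgue (\<lambda>y. indicator A (y + v) * \<psi> y)"
    using lebesgue_integral_translate[OF borel_measurable_integrable[OF i1], of v] by simp
  then show "integral\<^sup>L lebesgue (\<lambda>x. indicator A x * (\<psi> (x - v) - \<psi> x))
       = integral\<^sup>L lebesgue (\<lambda>y. (indicator A (y + v) - indicator A y) * \<psi> y)"
    using Bochner_Integration.integral_diff[OF i1 i2] Bochner_Integration.integral_diff[OF i3 i2]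
    by (simp add: right_diff_distrib left_diff_distrib)
qed

lemma abs_integral_shift_difference_le_exit_sets:
  assumes \<psi>: "continuous_on UNIV \<psi>" "compact (tsupport \<psi>)"
    and support: "tsupport \<psi> \<subseteq> erosion W (closed_segment 0 v)" and bound: "\<And>x. \<bar>\<psi> x\<bar> \<le> 1"
  shows "\<bar>integral\<^sup>L lebesgue (\<lambda>x. indicator A x * (\<psi> (x - v) - \<psi> x))\<bar>
    \<le> measure lebesgue (exit_set A W v) + measure lebesgue (exit_set (- A) W v)"
proof -
  let ?N = "exit_set A W v" and ?P = "exit_set (- A) W v"
  note N = exit_sets_lmeasurable(1) and P = exit_sets_lmeasurable(2)
  have pointwise: "\<bar>(indicator A (y + v) - indicator A y) * \<psi> y\<bar> \<le> 1 * indicator (?N \<union> ?P) y" for y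
  proof (cases "y \<in> tsupport \<psi>")
    case True
    then have "y \<in> erosion W (closed_segment 0 v)"
      using support by blast
    then show ?thesis
      using bound[of y] by (cases "y \<in> A"; cases "y + v \<in> A") (auto simp: exit_set_def abs_mult)
  qed (simp add: eq_0_outside_tsupport)
  have "?N \<union> ?P \<in> lmeasurable"
    using N P by (rule fmeasurable.Un)
  from abs_integral_le_measure[OF integral_shift_difference(1)[OF \<psi>] this pointwise]
  have "\<bar>integral\<^sup>L lebesgue (\<lambda>y. (indicator A (y + v) - indicator A y) * \<psi> y)\<bar>
      \<le> 1 * measure lebesgue (?N \<union> ?P)" .
  also have "\<dots> \<le> measure lebesgue ?N + measure lebesgue ?P"
    using N P by (simp add: measure_Un_le fmeasurableD)
  finally show ?thesis
    unfolding integral_shift_difference(2)[OF \<psi>] .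
qed

text \<open>Conversely, a \<open>C\<^sup>1\<close> function equal to \<open>1\<close> on most of the entry set and to \<open>-1\<close> on most of the
  exit set almost attains that bound.\<close>

lemma exit_sets_le_integral_shift_difference:
  assumes "e > 0"
  obtains \<psi> g where "has_continuous_gradient \<psi> g" "compact (tsupport \<psi>)"
    "tsupport \<psi> \<subseteq> erosion W (closed_segment 0 v)" "\<And>x. \<bar>\<psi> x\<bar> \<le> 1"
    "measure lebesgue (exit_set A W v) + measure lebesgue (exit_set (- A) W v) - e
       \<le> integral\<^sup>L lebesgue (\<lambda>x. indicator A x * (\<psi> (x - v) - \<psi> x))"
proof -
  let ?E = "erosion W (closed_segment 0 v)"
  let ?N = "exit_set A W v" and ?P = "exit_set (- A) W v"
  have "?N \<subseteq> W" "?P \<subseteq> W"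
    using exit_set_subset erosion_segment_subset by blast+
  then have bounded: "bounded ?N" "bounded ?P"
    using bounded_subset[OF W_bounded] by auto
  have "e / 3 > 0"
    using \<open>e > 0\<close> by simp
  obtain KN where KN: "compact KN" "KN \<subseteq> ?N" "measure lebesgue ?N \<le> measure lebesgue KN + e / 3"
    using exists_compact_inner_approx[OF exit_sets_lmeasurable(1) bounded(1) \<open>e / 3 > 0\<close>] by blast
  obtain KP where KP: "compact KP" "KP \<subseteq> ?P" "measure lebesgue ?P \<le> measure lebesgue KP + e / 3"
    using exists_compact_inner_approx[OF exit_sets_lmeasurable(2) bounded(2) \<open>e / 3 > 0\<close>] by blast
  have disjoint: "KP \<inter> KN = {}" and subset: "KP \<union> KN \<subseteq> ?E"
    using KN(2) KP(2) exit_set_subset unfolding exit_set_def by blast+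
  obtain \<psi> g where \<psi>: "has_continuous_gradient \<psi> g" "compact (tsupport \<psi>)" "tsupport \<psi> \<subseteq> ?E"
    "\<And>x. \<bar>\<psi> x\<bar> \<le> 1" "\<And>x. x \<in> KP \<Longrightarrow> \<psi> x = 1" "\<And>x. x \<in> KN \<Longrightarrow> \<psi> x = - 1"
    and S: "{x. \<psi> x \<noteq> 0} - (KP \<union> KN) \<in> lmeasurable"
      "measure lebesgue ({x. \<psi> x \<noteq> 0} - (KP \<union> KN)) < e / 3"
    using exists_C1_sign_function[OF KP(1) KN(1) disjoint open_erosion_segment[OF W_open] subset
        \<open>e / 3 > 0\<close>] by blast
  let ?S = "{x. \<psi> x \<noteq> 0} - (KP \<union> KN)"
  define R :: "'a \<Rightarrow> real" where "R y = indicator KP y + indicator KN y - indicator ?S y" for y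
  have pointwise: "R y \<le> (indicator A (y + v) - indicator A y) * \<psi> y" for y
    unfolding R_def using KP(2) KN(2) \<psi>(4-6) by (rule indicators_le_shift_difference_mult)
  have "integrable lebesgue (indicator K :: 'a \<Rightarrow> real)" if "K \<in> lmeasurable" for K
    using that by (intro integrable_real_indicator) (auto simp: fmeasurable_def)
  then have "integrable lebesgue R" and integral_R: "integral\<^sup>L lebesgue R
      = measure lebesgue KP + measure lebesgue KN - measure lebesgue ?S"
    unfolding R_def using KP(1) KN(1) S(1) by (simp_all add: lmeasurable_compact)
  note shift = integral_shift_difference[OF has_continuous_gradient_imp_continuous[OF \<psi>(1)] \<psi>(2)]
  have "integral\<^sup>L lebesgue R \<le> integral\<^sup>L lebesgue (\<lambda>y. (indicator A (y + v) - indicator A y) * \<psi> y)"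
    by (rule integral_mono[OF \<open>integrable lebesgue R\<close> shift(1) pointwise])
  then have "measure lebesgue KP + measure lebesgue KN - measure lebesgue ?S
      \<le> integral\<^sup>L lebesgue (\<lambda>x. indicator A x * (\<psi> (x - v) - \<psi> x))"
    unfolding integral_R shift(2) .
  then show ?thesis
    using that[OF \<psi>(1-4)] KN(3) KP(3) S(2) by linarith
qed

lemma integral_shift_difference_approx:
  assumes \<psi>: "has_continuous_gradient \<psi> g" "compact (tsupport \<psi>)" and "e > 0"
  obtains n :: nat where "n > 0"
    "\<bar>integral\<^sup>L lebesgue (\<lambda>x. indicator A x * (\<psi> (x - v) - \<psi> x))
      + integral\<^sup>L lebesgue (\<lambda>x. indicator A x *
          (((1 / real n) *\<^sub>R (\<Sum>k<n. g (x - (real k / real n) *\<^sub>R v))) \<bullet> v))\<bar> \<le> e"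
proof -
  obtain R where R: "\<forall>y\<in>tsupport \<psi>. norm y \<le> R"
    using compact_imp_bounded[OF \<psi>(2)] unfolding bounded_iff by blast
  define B where "B = cball (0::'a) (R + norm v)"
  have B: "B \<in> lmeasurable" "bounded B"
    by (simp_all add: B_def lmeasurable_cball)
  obtain \<eta> where \<eta>: "\<eta> > 0" "\<eta> * (norm v * measure lebesgue B) \<le> e"
    using exists_pos_mult_le[OF _ \<open>e > 0\<close>, of "norm v * measure lebesgue B"] by auto
  obtain n where n: "n > 0" and riemann:
    "\<And>x. \<bar>\<psi> (x - v) - \<psi> x + (\<Sum>k<n. g (x - (real k / real n) *\<^sub>R v) \<bullet> v) / real n\<bar> \<le> \<eta> * norm v"
    using shift_difference_riemann_sum[OF \<psi> \<eta>(1)] by blast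
  define avg where "avg x = (1 / real n) *\<^sub>R (\<Sum>k<n. g (x - (real k / real n) *\<^sub>R v))" for x
  have "has_continuous_gradient (\<lambda>x. (1 / real n) * (\<Sum>k<n. \<psi> (x - (real k / real n) *\<^sub>R v))) avg"
    unfolding avg_def by (intro has_continuous_gradient_cmult has_continuous_gradient_sum
        has_continuous_gradient_translate[OF \<psi>(1)])
  then have cont_avg: "continuous_on UNIV (\<lambda>x. avg x \<bullet> v)"
    by (rule continuous_on_gradient_inner)
  have cont_diff: "continuous_on UNIV (\<lambda>x. \<psi> (x - v) - \<psi> x)"
    using has_continuous_gradient_imp_continuous[OF has_continuous_gradient_translate[OF \<psi>(1)]]
      has_continuous_gradient_imp_continuous[OF \<psi>(1)] by (rule continuous_on_diff)
  have zero: "\<psi> (x - v) - \<psi> x = 0 \<and> avg x \<bullet> v = 0" if "x \<notin> B" for x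
  proof -
    have "x - t *\<^sub>R v \<notin> tsupport \<psi>" if "0 \<le> t" "t \<le> 1" for t
      using notin_tsupport_translate[OF R _ that] \<open>x \<notin> B\<close> by (simp add: B_def)
    from this[of 0] this[of 1] this[of "real _ / real n"] show ?thesis
      unfolding avg_def
      using eq_0_outside_tsupport[of x \<psi>] eq_0_outside_tsupport[of "x - v" \<psi>]
        gradient_eq_0_outside_tsupport[OF \<psi>(1)]
      by (simp add: sum.neutral)
  qed
  have "\<bar>\<psi> (x - v) - \<psi> x + avg x \<bullet> v\<bar> \<le> \<eta> * norm v" for x
    using riemann[of x] by (simp add: avg_def inner_sum_left divide_inverse mult.commute)
  from abs_integral_indicator_mult_add_le[OF A_sets cont_diff cont_avg B zero this]
  have "\<bar>integral\<^sup>L lebesgue (\<lambda>x. indicator A x * (\<psi> (x - v) - \<psi> x))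
      + integral\<^sup>L lebesgue (\<lambda>x. indicator A x * (avg x \<bullet> v))\<bar> \<le> e"
    using \<eta>(2) by (simp add: mult.assoc)
  then show ?thesis
    unfolding avg_def by (rule that[OF n])
qed

text \<open>The averaged translates of \<open>\<psi>\<close> are test functions on \<open>W\<close>, so the Riemann sum above is
  controlled by the directional variation.\<close>

lemma integral_shift_difference_le_dir_var:
  assumes V: "dir_var u A W = ereal M"
    and \<psi>: "has_continuous_gradient \<psi> g" "compact (tsupport \<psi>)"
    and support: "tsupport \<psi> \<subseteq> erosion W (closed_segment 0 (\<epsilon> *\<^sub>R u))" and bound: "\<And>x. \<bar>\<psi> x\<bar> \<le> 1"
  shows "integral\<^sup>L lebesgue (\<lambda>x. indicator A x * (\<psi> (x - \<epsilon> *\<^sub>R u) - \<psi> x)) \<le> \<bar>\<epsilon>\<bar> * M"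
proof (rule field_le_epsilon)
  fix e :: real assume "e > 0"
  obtain n :: nat where n: "n > 0" and approx:
    "\<bar>integral\<^sup>L lebesgue (\<lambda>x. indicator A x * (\<psi> (x - \<epsilon> *\<^sub>R u) - \<psi> x))
      + integral\<^sup>L lebesgue (\<lambda>x. indicator A x *
          (((1 / real n) *\<^sub>R (\<Sum>k<n. g (x - (real k / real n) *\<^sub>R (\<epsilon> *\<^sub>R u)))) \<bullet> (\<epsilon> *\<^sub>R u)))\<bar> \<le> e"
    using integral_shift_difference_approx[OF \<psi> \<open>e > 0\<close>] by blast
  define G where
    "G x = indicator A x * (((1 / real n) *\<^sub>R (\<Sum>k<n. g (x - (real k / real n) *\<^sub>R (\<epsilon> *\<^sub>R u)))) \<bullet> u)"
    for x
  have "test_fun W (\<lambda>x. (1 / real n) * (\<Sum>k<n. \<psi> (x - (real k / real n) *\<^sub>R (\<epsilon> *\<^sub>R u))))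
      (\<lambda>x. (1 / real n) *\<^sub>R (\<Sum>k<n. g (x - (real k / real n) *\<^sub>R (\<epsilon> *\<^sub>R u))))"
  proof (rule test_fun_average[OF \<psi> bound n])
    fix k assume "k < n"
    then have "real k / real n \<in> {0..1}"
      by auto
    show "(+) ((real k / real n) *\<^sub>R (\<epsilon> *\<^sub>R u)) ` tsupport \<psi> \<subseteq> W"
    proof
      fix z assume "z \<in> (+) ((real k / real n) *\<^sub>R (\<epsilon> *\<^sub>R u)) ` tsupport \<psi>"
      then obtain y where y: "y \<in> tsupport \<psi>" and "z = (real k / real n) *\<^sub>R (\<epsilon> *\<^sub>R u) + y"
        by blast
      then have z: "z = y + (real k / real n) *\<^sub>R (\<epsilon> *\<^sub>R u)"
        by (simp add: add.commute)
      have "y \<in> erosion W (closed_segment 0 (\<epsilon> *\<^sub>R u))"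
        using y support by blast
      with \<open>real k / real n \<in> {0..1}\<close> show "z \<in> W"
        unfolding z mem_erosion_segment by blast
    qed
  qed
  from abs_integral_gradient_le_dir_var[OF V this]
  have "\<bar>integral\<^sup>L lebesgue G\<bar> \<le> M"
    unfolding G_def .
  then have "\<bar>\<epsilon>\<bar> * \<bar>integral\<^sup>L lebesgue G\<bar> \<le> \<bar>\<epsilon>\<bar> * M"
    by (rule mult_left_mono) simp
  moreover have "- (\<epsilon> * integral\<^sup>L lebesgue G) \<le> \<bar>\<epsilon>\<bar> * \<bar>integral\<^sup>L lebesgue G\<bar>"
    unfolding abs_mult[symmetric] by (rule abs_ge_minus_self)
  ultimately have "- (\<epsilon> * integral\<^sup>L lebesgue G) \<le> \<bar>\<epsilon>\<bar> * M"
    by (rule order_trans[rotated])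
  moreover have "(\<lambda>x. indicator A x *
          (((1 / real n) *\<^sub>R (\<Sum>k<n. g (x - (real k / real n) *\<^sub>R (\<epsilon> *\<^sub>R u)))) \<bullet> (\<epsilon> *\<^sub>R u)))
      = (\<lambda>x. \<epsilon> * G x)"
    by (simp add: G_def fun_eq_iff mult.left_commute)
  ultimately show "integral\<^sup>L lebesgue (\<lambda>x. indicator A x * (\<psi> (x - \<epsilon> *\<^sub>R u) - \<psi> x)) \<le> \<bar>\<epsilon>\<bar> * M + e"
    using approx by simp
qed

lemma exit_sets_le_dir_var:
  assumes "dir_var u A W = ereal M"
  shows "measure lebesgue (exit_set A W (\<epsilon> *\<^sub>R u)) + measure lebesgue (exit_set (- A) W (\<epsilon> *\<^sub>R u))
    \<le> \<bar>\<epsilon>\<bar> * M"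
proof (rule field_le_epsilon)
  fix e :: real assume "e > 0"
  obtain \<psi> g where \<psi>: "has_continuous_gradient \<psi> g" "compact (tsupport \<psi>)"
    "tsupport \<psi> \<subseteq> erosion W (closed_segment 0 (\<epsilon> *\<^sub>R u))" "\<And>x. \<bar>\<psi> x\<bar> \<le> 1"
    and le: "measure lebesgue (exit_set A W (\<epsilon> *\<^sub>R u)) + measure lebesgue (exit_set (- A) W (\<epsilon> *\<^sub>R u)) - e
       \<le> integral\<^sup>L lebesgue (\<lambda>x. indicator A x * (\<psi> (x - \<epsilon> *\<^sub>R u) - \<psi> x))"
    using exit_sets_le_integral_shift_difference[OF \<open>e > 0\<close>, where v = "\<epsilon> *\<^sub>R u"] by blast
  with integral_shift_difference_le_dir_var[OF assms \<psi>]
  show "measure lebesgue (exit_set A W (\<epsilon> *\<^sub>R u)) + measure lebesgue (exit_set (- A) W (\<epsilon> *\<^sub>R u))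
      \<le> \<bar>\<epsilon>\<bar> * M + e"
    by linarith
qed

lemma sigma_cov_le_dir_var:
  assumes "norm u = 1" "\<epsilon> \<noteq> 0"
  shows "ereal (sigma_cov (\<epsilon> *\<^sub>R u) W A) \<le> dir_var u A W"
proof (cases "dir_var u A W")
  case (real M)
  have "u \<noteq> 0"
    using assms(1) by auto
  then have "\<bar>\<epsilon>\<bar> * sigma_cov (\<epsilon> *\<^sub>R u) W A \<le> \<bar>\<epsilon>\<bar> * M"
    using norm_mult_sigma_cov[of "\<epsilon> *\<^sub>R u"] exit_sets_le_dir_var[OF real, of \<epsilon>] assms by simp
  then have "sigma_cov (\<epsilon> *\<^sub>R u) W A \<le> M"
    using assms(2) by simp
  with real show ?thesis
    by simp
next
  case MInf
  with dir_var_nonneg[of u A W] show ?thesis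
    by simp
qed simp

lemma integral_shift_difference_first_order:
  assumes \<phi>: "has_continuous_gradient \<phi> g" "compact (tsupport \<phi>)" and "e > 0"
  obtains d where "d > 0" "\<And>v. norm v < d \<Longrightarrow>
    \<bar>integral\<^sup>L lebesgue (\<lambda>x. indicator A x * (\<phi> (x - v) - \<phi> x))
      + integral\<^sup>L lebesgue (\<lambda>x. indicator A x * (g x \<bullet> v))\<bar> \<le> e * norm v"
proof -
  obtain R where R: "\<forall>y\<in>tsupport \<phi>. norm y \<le> R"
    using compact_imp_bounded[OF \<phi>(2)] unfolding bounded_iff by blast
  define B where "B = cball (0::'a) (R + 1)"
  have B: "B \<in> lmeasurable" "bounded B"
    by (simp_all add: B_def lmeasurable_cball)
  obtain \<eta> where \<eta>: "\<eta> > 0" "\<eta> * measure lebesgue B \<le> e"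
    using exists_pos_mult_le[OF measure_nonneg \<open>e > 0\<close>] by blast
  obtain \<delta> where \<delta>: "\<delta> > 0" "\<And>y h. norm h < \<delta> \<Longrightarrow> \<bar>\<phi> (y + h) - \<phi> y - g y \<bullet> h\<bar> \<le> \<eta> * norm h"
    using first_order_estimate_uniform[OF \<phi> \<eta>(1)] by blast
  have "\<bar>integral\<^sup>L lebesgue (\<lambda>x. indicator A x * (\<phi> (x - v) - \<phi> x))
      + integral\<^sup>L lebesgue (\<lambda>x. indicator A x * (g x \<bullet> v))\<bar> \<le> e * norm v"
    if v: "norm v < min \<delta> 1" for v
  proof -
    have cont_diff: "continuous_on UNIV (\<lambda>x. \<phi> (x - v) - \<phi> x)"
      using has_continuous_gradient_imp_continuous[OF has_continuous_gradient_translate[OF \<phi>(1)]]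
        has_continuous_gradient_imp_continuous[OF \<phi>(1)] by (rule continuous_on_diff)
    have cont_grad: "continuous_on UNIV (\<lambda>x. g x \<bullet> v)"
      using \<phi>(1) by (rule continuous_on_gradient_inner)
    have zero: "\<phi> (x - v) - \<phi> x = 0 \<and> g x \<bullet> v = 0" if "x \<notin> B" for x
    proof -
      have "x - t *\<^sub>R v \<notin> tsupport \<phi>" if "0 \<le> t" "t \<le> 1" for t
        using notin_tsupport_translate[OF R _ that] \<open>x \<notin> B\<close> v by (simp add: B_def)
      from this[of 0] this[of 1] show ?thesis
        using eq_0_outside_tsupport[of x \<phi>] eq_0_outside_tsupport[of "x - v" \<phi>]
          gradient_eq_0_outside_tsupport[OF \<phi>(1), of x] by simp
    qed
    have "\<bar>\<phi> (x + - v) - \<phi> x - g x \<bullet> - v\<bar> \<le> \<eta> * norm (- v)" for x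
      using v by (intro \<delta>(2)) simp
    then have "\<bar>\<phi> (x - v) - \<phi> x + g x \<bullet> v\<bar> \<le> \<eta> * norm v" for x
      by simp
    from abs_integral_indicator_mult_add_le[OF A_sets cont_diff cont_grad B zero this]
    have "\<bar>integral\<^sup>L lebesgue (\<lambda>x. indicator A x * (\<phi> (x - v) - \<phi> x))
        + integral\<^sup>L lebesgue (\<lambda>x. indicator A x * (g x \<bullet> v))\<bar> \<le> \<eta> * norm v * measure lebesgue B" .
    also have "\<dots> = (\<eta> * measure lebesgue B) * norm v"
      by (simp add: ac_simps)
    also have "\<dots> \<le> e * norm v"
      using \<eta>(2) by (rule mult_right_mono) simp
    finally show ?thesis .
  qed
  moreover have "min \<delta> 1 > 0"
    using \<delta>(1) by simp
  ultimately show ?thesis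
    using that by blast
qed


lemma eventually_integral_gradient_le_sigma_cov:
  assumes u: "norm u = 1" and \<phi>: "test_fun W \<phi> g" and "e > 0"
  shows "\<forall>\<^sub>F \<epsilon> in at 0. integral\<^sup>L lebesgue (\<lambda>x. indicator A x * (g x \<bullet> u)) - e \<le> sigma_cov (\<epsilon> *\<^sub>R u) W A"
proof -
  have \<phi>': "has_continuous_gradient \<phi> g" "compact (tsupport \<phi>)" "tsupport \<phi> \<subseteq> W" "\<And>x. \<bar>\<phi> x\<bar> \<le> 1"
    using \<phi> unfolding test_fun_iff by auto
  obtain d1 where d1: "d1 > 0" "\<And>w. norm w < d1 \<Longrightarrow> tsupport \<phi> \<subseteq> erosion W (closed_segment 0 w)"
    using compact_subset_erosion_segment[OF \<phi>'(2) W_open \<phi>'(3)] by blast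
  obtain d2 where d2: "d2 > 0" "\<And>v. norm v < d2 \<Longrightarrow>
    \<bar>integral\<^sup>L lebesgue (\<lambda>x. indicator A x * (\<phi> (x - v) - \<phi> x))
      + integral\<^sup>L lebesgue (\<lambda>x. indicator A x * (g x \<bullet> v))\<bar> \<le> e * norm v"
    using integral_shift_difference_first_order[OF \<phi>'(1,2) \<open>e > 0\<close>] by blast
  define J where "J = integral\<^sup>L lebesgue (\<lambda>x. indicator A x * (g x \<bullet> u))"
  have "\<forall>\<^sub>F \<epsilon> in at 0. \<epsilon> \<noteq> 0 \<and> \<bar>\<epsilon>\<bar> < min d1 d2"
    unfolding eventually_at using d1(1) d2(1)
    by (intro exI[of _ "min d1 d2"]) (auto simp: dist_norm)
  then show ?thesis
  proof (rule eventually_mono, elim conjE)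
    fix \<epsilon> :: real assume "\<epsilon> \<noteq> 0" and small: "\<bar>\<epsilon>\<bar> < min d1 d2"
    define Q where "Q = integral\<^sup>L lebesgue (\<lambda>x. indicator A x * (\<phi> (x - \<epsilon> *\<^sub>R u) - \<phi> x))"
    have "norm (\<epsilon> *\<^sub>R u) < d1" "\<epsilon> *\<^sub>R u \<noteq> 0"
      using small u \<open>\<epsilon> \<noteq> 0\<close> by auto
    then have "\<bar>Q\<bar> \<le> \<bar>\<epsilon>\<bar> * sigma_cov (\<epsilon> *\<^sub>R u) W A"
      unfolding Q_def
      using abs_integral_shift_difference_le_exit_sets[OF has_continuous_gradient_imp_continuous[OF \<phi>'(1)]
          \<phi>'(2) d1(2) \<phi>'(4)] norm_mult_sigma_cov[of "\<epsilon> *\<^sub>R u"] u by simp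
    moreover have "\<bar>Q + \<epsilon> * J\<bar> \<le> \<bar>\<epsilon>\<bar> * e"
      using d2(2)[of "\<epsilon> *\<^sub>R u"] small u unfolding Q_def J_def by (simp add: mult.left_commute mult.commute)
    moreover have "\<bar>\<epsilon> * J\<bar> \<le> \<bar>Q + \<epsilon> * J\<bar> + \<bar>Q\<bar>"
      using abs_triangle_ineq4[of "Q + \<epsilon> * J" Q] by simp
    ultimately have "\<bar>\<epsilon>\<bar> * \<bar>J\<bar> \<le> \<bar>\<epsilon>\<bar> * (sigma_cov (\<epsilon> *\<^sub>R u) W A + e)"
      unfolding abs_mult[symmetric] distrib_left by linarith
    then have "\<bar>J\<bar> \<le> sigma_cov (\<epsilon> *\<^sub>R u) W A + e"
      using \<open>\<epsilon> \<noteq> 0\<close> by simp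
    then show "integral\<^sup>L lebesgue (\<lambda>x. indicator A x * (g x \<bullet> u)) - e \<le> sigma_cov (\<epsilon> *\<^sub>R u) W A"
      unfolding J_def by linarith
  qed
qed

lemma sigma_cov_tendsto_dir_var:
  assumes u: "norm u = 1"
  shows "((\<lambda>\<epsilon>. ereal (sigma_cov (\<epsilon> *\<^sub>R u) W A)) \<longlongrightarrow> dir_var u A W) (at 0)"
proof (rule order_tendstoI)
  fix a assume "a < dir_var u A W"
  then obtain p where p: "p \<in> {(\<phi>, g). test_fun W \<phi> g}"
    and a: "a < ereal (integral\<^sup>L lebesgue (\<lambda>x. indicator A x * (snd p x \<bullet> u)))"
    unfolding dir_var_eq_SUP_integral less_SUP_iff by blast
  obtain \<phi> g where "p = (\<phi>, g)"
    by (cases p)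
  with p a have \<phi>: "test_fun W \<phi> g" and a: "a < ereal (integral\<^sup>L lebesgue (\<lambda>x. indicator A x * (g x \<bullet> u)))"
    by auto
  define J where "J = integral\<^sup>L lebesgue (\<lambda>x. indicator A x * (g x \<bullet> u))"
  show "\<forall>\<^sub>F \<epsilon> in at 0. a < ereal (sigma_cov (\<epsilon> *\<^sub>R u) W A)"
  proof (cases a)
    case (real r)
    with a have "r < J"
      by (simp add: J_def)
    then have "(J - r) / 2 > 0"
      by simp
    from eventually_integral_gradient_le_sigma_cov[OF u \<phi> this]
    show ?thesis
    proof (rule eventually_mono)
      fix \<epsilon> :: real
      assume "integral\<^sup>L lebesgue (\<lambda>x. indicator A x * (g x \<bullet> u)) - (J - r) / 2 \<le> sigma_cov (\<epsilon> *\<^sub>R u) W A"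
      then have "J + r \<le> 2 * sigma_cov (\<epsilon> *\<^sub>R u) W A"
        unfolding J_def[symmetric] by (simp add: field_simps)
      with \<open>r < J\<close> have "r < sigma_cov (\<epsilon> *\<^sub>R u) W A"
        by linarith
      with real show "a < ereal (sigma_cov (\<epsilon> *\<^sub>R u) W A)"
        by simp
    qed
  qed (use a in simp_all)
next
  fix a assume "dir_var u A W < a"
  have "\<forall>\<^sub>F \<epsilon> in at (0::real). \<epsilon> \<noteq> 0"
    by (rule eventually_neq_at_within)
  then show "\<forall>\<^sub>F \<epsilon> in at 0. ereal (sigma_cov (\<epsilon> *\<^sub>R u) W A) < a"
    by (rule eventually_mono) (use sigma_cov_le_dir_var[OF u] \<open>dir_var u A W < a\<close> in \<open>blast intro: le_less_trans\<close>)
qed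

end

lemma tendsto_sum_ereal_nonneg:
  fixes f :: "'i \<Rightarrow> 'b \<Rightarrow> ereal"
  assumes "finite I" "\<And>i. i \<in> I \<Longrightarrow> (f i \<longlongrightarrow> L i) F" "\<And>i. i \<in> I \<Longrightarrow> 0 \<le> L i"
  shows "((\<lambda>x. \<Sum>i\<in>I. f i x) \<longlongrightarrow> (\<Sum>i\<in>I. L i)) F"
  using assms
proof (induction I rule: finite_induct)
  case (insert i I)
  have "L i \<noteq> - \<infinity>" "(\<Sum>i\<in>I. L i) \<noteq> - \<infinity>"
    using insert.prems(2) sum_nonneg[of I L] by fastforce+
  from tendsto_add_ereal_nonneg[OF this insert.prems(1)[of i] insert.IH] insert.prems
  show ?case
    using insert.hyps by simp
qed simp

theorem proposition3p3:
  fixes A W :: "'a::euclidean_space set"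
  assumes "A \<in> sets lebesgue"
    and "bounded W" and "open W" and "emeasure lebesgue (frontier W) = 0"
  shows "(\<forall>u. norm u = 1 \<longrightarrow>
            (\<forall>\<epsilon>::real. \<epsilon> \<noteq> 0 \<longrightarrow>
               0 \<le> sigma_cov (\<epsilon> *\<^sub>R u) W A \<and>
               ereal (sigma_cov (\<epsilon> *\<^sub>R u) W A) \<le> dir_var u A W) \<and>
            ((\<lambda>\<epsilon>. ereal (sigma_cov (\<epsilon> *\<^sub>R u) W A)) \<longlongrightarrow> dir_var u A W) (at 0))
       \<and> (\<forall>\<epsilon>::real. \<epsilon> \<noteq> 0 \<longrightarrow>
            0 \<le> (\<Sum>b\<in>Basis. sigma_cov (\<epsilon> *\<^sub>R b) W A) \<and>
            ereal (\<Sum>b\<in>Basis. sigma_cov (\<epsilon> *\<^sub>R b) W A) \<le> per_B A W)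
       \<and> ((\<lambda>\<epsilon>. ereal (\<Sum>b\<in>Basis. sigma_cov (\<epsilon> *\<^sub>R b) W A)) \<longlongrightarrow> per_B A W) (at 0)"
proof -
  interpret measurable_set_in_window A W
    using assms(1-3) by unfold_locales
  note nonneg = sigma_cov_nonneg[OF assms(1-3)]
  have basis: "norm b = 1" if "b \<in> (Basis :: 'a set)" for b
    using that by simp
  have "ereal (\<Sum>b\<in>Basis. sigma_cov (\<epsilon> *\<^sub>R b) W A) \<le> per_B A W" if "\<epsilon> \<noteq> 0" for \<epsilon> :: real
    unfolding per_B_def sum_ereal[symmetric]
    by (rule sum_mono) (rule sigma_cov_le_dir_var[OF basis that])
  moreover have "((\<lambda>\<epsilon>. ereal (\<Sum>b\<in>Basis. sigma_cov (\<epsilon> *\<^sub>R b) W A)) \<longlongrightarrow> per_B A W) (at 0)"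
    unfolding per_B_def sum_ereal[symmetric]
    by (rule tendsto_sum_ereal_nonneg) (auto intro: sigma_cov_tendsto_dir_var dir_var_nonneg)
  ultimately show ?thesis
    using nonneg sigma_cov_le_dir_var sigma_cov_tendsto_dir_var by (simp add: sum_nonneg)
qed

end
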